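(* Let $\mathfrak{g}$ be a nice nilpotent Lie algebra of dimension $n$ with nice diagram $\Delta$, $m$ arrows, and structure constants $c\in\mathbb{R}^m$, let $\sigma$ be a diagram involution, and let $k\in\mathbb{R}$ and $\delta\in(\mathbb{Z}_2)^n$ be $\sigma$-invariant. Then $\mathfrak{g}$ has a $\sigma$-diagonal metric $g=\sum_i g_ie^i\otimes e^{\sigma_i}$ with $\operatorname{logsign} g=\delta$ and Ricci operator $\operatorname{Ric}=\frac12k\,\mathrm{id}$ if and only if there exists a $\sigma$-invariant $X\in\mathbb{R}^m$ such that: (K) $M_\Delta^{T}X=[k]$; (H) all entries of $X$ are nonzero; (L$_\sigma$) $\operatorname{logsign} X+\operatorname{logsign} c+\operatorname{logsign}\tilde c=M_{\Delta,2}\,\delta$; (P$_\sigma$) for a basis $\alpha_1,\dots,\alpha_r$ of the $\sigma$-invariant subspace $(\ker M_\Delta^T)^\sigma$, one has $\lvert X\rvert^{\alpha_i}=\lvert c\rvert^{2\alpha_i}$, $i=1,\dots,r$.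
   Context: A nice basis of a real Lie algebra is a basis $\{e_1,\dots,e_n\}$ with dual basis $\{e^i\}$ such that each $[e_i,e_j]$ is a multiple of some $e_h$ and each $e_i\lrcorner\,de^j$ is a multiple of some $e^h$ ($d$ the Chevalley–Eilenberg differential); a nice Lie algebra is a Lie algebra with a fixed nice basis. The nice diagram $\Delta$ has nodes $1,\dots,n$ and an arrow $i\xrightarrow{j}k$ whenever $e_k$ is a nonzero multiple of $[e_i,e_j]$; $\mathcal I_\Delta$ is the set of triples $\{\{i,j\},k\}$ with $i\xrightarrow{j}k$ an arrow, $m=\lvert\mathcal I_\Delta\rvert$. The structure constants $c\in\mathbb{R}^m$ are defined by $de^k=\sum c_{ijk}e^i\wedge e^j$ ($i<j$, over $\mathcal I_\Delta$). The root matrix $M_\Delta$ is the $m\times n$ matrix whose row indexed by $\{\{i,j\},k\}$ has $1$ in column $k$, $-1$ in columns $i,j$, $0$ elsewhere; $M_{\Delta,2}$ is its reduction mod $2$. A diagram involution is a permutation $\sigma$ of $\{1,\dots,n\}$ of order two which is an automorphism of $\Delta$, i.e. $i\xrightarrow{j}k$ is an arrow iff $\sigma_i\xrightarrow{\sigma_j}\sigma_k$ is. It acts on $\mathbb{R}^n$ by permuting coordinates and on $\mathbb{R}^m$ by permuting coordinates via $\{\{i,j\},k\}\mapsto\{\{\sigma_i,\sigma_j\},\sigma_k\}$. The vector $\tilde c\in\mathbb{R}^m$ is the coordinate vector, in the basis $e^l\wedge e^h\otimes e_p$ ($l<h$), of $\sum c_{ijk}\,e^{\sigma_i}\wedge e^{\sigma_j}\otimes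 e_{\sigma_k}$. A $\sigma$-diagonal metric is a nondegenerate scalar product $\sum_i g_ie^i\otimes e^{\sigma_i}$ with $g=(g_1,\dots,g_n)\in(\mathbb{R}\setminus\{0\})^n$ $\sigma$-invariant. $\operatorname{logsign}x=0$ for $x>0$ and $1$ for $x<0$, applied componentwise; $[k]\in\mathbb{R}^n$ has all entries $k$; $\lvert X\rvert^\alpha=\prod_j\lvert x_j\rvert^{\alpha_j}$; $\operatorname{Ric}$ is the Ricci operator of the left-invariant pseudoriemannian metric. *)

theory Defs
  imports Complex_Main
begin

text \<open>A real Lie algebra of dimension n with basis e_0,...,e_(n-1) is given by its
  bracket coefficients: [e_i,e_j] = sum_h C i j h e_h (indices below n).\<close>

definition lie_algebra :: "nat \<Rightarrow> (nat \<Rightarrow> nat \<Rightarrow> nat \<Rightarrow> real) \<Rightarrow> bool" where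
  "lie_algebra n C \<longleftrightarrow>
     (\<forall>i j h. \<not> (i < n \<and> j < n \<and> h < n) \<longrightarrow> C i j h = 0) \<and>
     (\<forall>i j h. C i j h = - C j i h) \<and>
     (\<forall>a<n. \<forall>b<n. \<forall>c<n. \<forall>h<n.
        (\<Sum>p<n. C a b p * C p c h + C b c p * C p a h + C c a p * C p b h) = 0)"

text \<open>Chevalley--Eilenberg differential: de^k(e_i,e_j) = - e^k([e_i,e_j]).\<close>
definition dcoef :: "(nat \<Rightarrow> nat \<Rightarrow> nat \<Rightarrow> real) \<Rightarrow> nat \<Rightarrow> nat \<Rightarrow> nat \<Rightarrow> real" where
  "dcoef C i j k = - C i j k"

text \<open>Nice basis: each [e_i,e_j] is a multiple of a single e_h, and each
  e_i \<lrcorner> de^j = sum_h de^j(e_i,e_h) e^h is a multiple of a single e^h.\<close>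
definition nice_lie_algebra :: "nat \<Rightarrow> (nat \<Rightarrow> nat \<Rightarrow> nat \<Rightarrow> real) \<Rightarrow> bool" where
  "nice_lie_algebra n C \<longleftrightarrow> lie_algebra n C \<and>
     (\<forall>i<n. \<forall>j<n. \<forall>h<n. \<forall>h'<n. C i j h \<noteq> 0 \<longrightarrow> C i j h' \<noteq> 0 \<longrightarrow> h = h') \<and>
     (\<forall>i<n. \<forall>j<n. \<forall>h<n. \<forall>h'<n. dcoef C i h j \<noteq> 0 \<longrightarrow> dcoef C i h' j \<noteq> 0 \<longrightarrow> h = h')"

definition lie_bracket :: "nat \<Rightarrow> (nat \<Rightarrow> nat \<Rightarrow> nat \<Rightarrow> real) \<Rightarrow> (nat \<Rightarrow> real) \<Rightarrow> (nat \<Rightarrow> real) \<Rightarrow> (nat \<Rightarrow> real)" where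
  "lie_bracket n C x y = (\<lambda>h. \<Sum>i<n. \<Sum>j<n. x i * y j * C i j h)"

definition nilpotent_lie :: "nat \<Rightarrow> (nat \<Rightarrow> nat \<Rightarrow> nat \<Rightarrow> real) \<Rightarrow> bool" where
  "nilpotent_lie n C \<longleftrightarrow> (\<exists>N. \<forall>xs y. length xs = N \<longrightarrow>
      (\<forall>h<n. foldr (lie_bracket n C) xs y h = 0))"

text \<open>Index set I_Delta: triples (i,j,k), i<j, with an arrow i -j-> k.\<close>
definition arrows :: "nat \<Rightarrow> (nat \<Rightarrow> nat \<Rightarrow> nat \<Rightarrow> real) \<Rightarrow> (nat \<times> nat \<times> nat) set" where
  "arrows n C = {(i, j, k). i < j \<and> j < n \<and> k < n \<and> C i j k \<noteq> 0}"

text \<open>Structure constants: de^k = sum_{i<j} c_ijk e^i\<and>e^j.\<close>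
definition struct_const :: "(nat \<Rightarrow> nat \<Rightarrow> nat \<Rightarrow> real) \<Rightarrow> nat \<times> nat \<times> nat \<Rightarrow> real" where
  "struct_const C t = (case t of (i, j, k) \<Rightarrow> dcoef C i j k)"

definition root_matrix :: "nat \<times> nat \<times> nat \<Rightarrow> nat \<Rightarrow> int" where
  "root_matrix t l = (case t of (i, j, k) \<Rightarrow>
      (if l = k then 1 else 0) - (if l = i then 1 else 0) - (if l = j then 1 else 0))"

text \<open>M_{Delta,2} delta, computed in Z_2 (values 0,1).\<close>
definition root_matrix2_mult :: "nat \<Rightarrow> (nat \<Rightarrow> int) \<Rightarrow> nat \<times> nat \<times> nat \<Rightarrow> int" where
  "root_matrix2_mult n \<delta> t = (\<Sum>l<n. root_matrix t l * \<delta> l) mod 2"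

definition diagram_involution :: "nat \<Rightarrow> (nat \<Rightarrow> nat \<Rightarrow> nat \<Rightarrow> real) \<Rightarrow> (nat \<Rightarrow> nat) \<Rightarrow> bool" where
  "diagram_involution n C \<sigma> \<longleftrightarrow>
     (\<forall>i<n. \<sigma> i < n) \<and> (\<forall>i<n. \<sigma> (\<sigma> i) = i) \<and> (\<exists>i<n. \<sigma> i \<noteq> i) \<and>
     (\<forall>i<n. \<forall>j<n. \<forall>k<n. C i j k \<noteq> 0 \<longleftrightarrow> C (\<sigma> i) (\<sigma> j) (\<sigma> k) \<noteq> 0)"

text \<open>Action of sigma on index triples {{i,j},k}.\<close>
definition sigma_act :: "(nat \<Rightarrow> nat) \<Rightarrow> nat \<times> nat \<times> nat \<Rightarrow> nat \<times> nat \<times> nat" where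
  "sigma_act \<sigma> t = (case t of (i, j, k) \<Rightarrow> (min (\<sigma> i) (\<sigma> j), max (\<sigma> i) (\<sigma> j), \<sigma> k))"

text \<open>c tilde: coefficient of e^l\<and>e^h\<otimes>e_p (l<h) in sum c_ijk e^{sigma i}\<and>e^{sigma j}\<otimes>e_{sigma k}.\<close>
definition c_tilde :: "(nat \<Rightarrow> nat) \<Rightarrow> (nat \<Rightarrow> nat \<Rightarrow> nat \<Rightarrow> real) \<Rightarrow> nat \<times> nat \<times> nat \<Rightarrow> real" where
  "c_tilde \<sigma> C t = (case t of (l, h, p) \<Rightarrow>
      (if \<sigma> l < \<sigma> h then struct_const C (\<sigma> l, \<sigma> h, \<sigma> p)
       else - struct_const C (\<sigma> h, \<sigma> l, \<sigma> p)))"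

definition logsign :: "real \<Rightarrow> int" where
  "logsign x = (if x < 0 then 1 else 0)"

definition abs_pow :: "(nat \<times> nat \<times> nat) set \<Rightarrow> (nat \<times> nat \<times> nat \<Rightarrow> real) \<Rightarrow> (nat \<times> nat \<times> nat \<Rightarrow> real) \<Rightarrow> real" where
  "abs_pow I X a = (\<Prod>t\<in>I. \<bar>X t\<bar> powr a t)"

text \<open>(ker M_Delta^T)^sigma, as a subspace of R^I (functions vanishing outside I).\<close>
definition inv_kernel :: "nat \<Rightarrow> (nat \<Rightarrow> nat \<Rightarrow> nat \<Rightarrow> real) \<Rightarrow> (nat \<Rightarrow> nat) \<Rightarrow> (nat \<times> nat \<times> nat \<Rightarrow> real) set" where
  "inv_kernel n C \<sigma> = {a. (\<forall>t. t \<notin> arrows n C \<longrightarrow> a t = 0) \<and>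
      (\<forall>l<n. (\<Sum>t\<in>arrows n C. of_int (root_matrix t l) * a t) = 0) \<and>
      (\<forall>t\<in>arrows n C. a (sigma_act \<sigma> t) = a t)}"

definition is_basis_of :: "nat \<Rightarrow> (nat \<Rightarrow> 'a \<Rightarrow> real) \<Rightarrow> ('a \<Rightarrow> real) set \<Rightarrow> bool" where
  "is_basis_of r \<alpha> V \<longleftrightarrow>
     (\<forall>i<r. \<alpha> i \<in> V) \<and>
     (\<forall>w. (\<lambda>t. \<Sum>i<r. w i * \<alpha> i t) = (\<lambda>t. 0) \<longrightarrow> (\<forall>i<r. w i = 0)) \<and>
     (\<forall>a\<in>V. \<exists>w. a = (\<lambda>t. \<Sum>i<r. w i * \<alpha> i t))"

text \<open>sigma-diagonal metric sum_i g_i e^i \<otimes> e^{sigma i}, as Gram matrix.\<close>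
definition sigma_diagonal :: "nat \<Rightarrow> (nat \<Rightarrow> nat) \<Rightarrow> (nat \<Rightarrow> real) \<Rightarrow> bool" where
  "sigma_diagonal n \<sigma> g \<longleftrightarrow> (\<forall>i<n. g i \<noteq> 0 \<and> g (\<sigma> i) = g i)"

definition sdiag_metric :: "(nat \<Rightarrow> nat) \<Rightarrow> (nat \<Rightarrow> real) \<Rightarrow> nat \<Rightarrow> nat \<Rightarrow> real" where
  "sdiag_metric \<sigma> g i j = (if j = \<sigma> i then g i else 0)"

text \<open>Left-invariant Levi-Civita connection (Koszul formula):
  2<nabla_x y, z> = <[x,y],z> - <[y,z],x> + <[z,x],y>;  nabla_{e_i} e_j = sum_k LC i j k e_k.\<close>
definition koszul :: "nat \<Rightarrow> (nat \<Rightarrow> nat \<Rightarrow> nat \<Rightarrow> real) \<Rightarrow> (nat \<Rightarrow> nat \<Rightarrow> real) \<Rightarrow> nat \<Rightarrow> nat \<Rightarrow> nat \<Rightarrow> real" where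
  "koszul n C G i j l = (1/2) * ((\<Sum>h<n. C i j h * G h l) - (\<Sum>h<n. C j l h * G h i)
                                 + (\<Sum>h<n. C l i h * G h j))"

definition levi_civita :: "nat \<Rightarrow> (nat \<Rightarrow> nat \<Rightarrow> nat \<Rightarrow> real) \<Rightarrow> (nat \<Rightarrow> nat \<Rightarrow> real) \<Rightarrow> nat \<Rightarrow> nat \<Rightarrow> nat \<Rightarrow> real" where
  "levi_civita n C G = (THE \<Gamma>. (\<forall>i j k. \<not> (i < n \<and> j < n \<and> k < n) \<longrightarrow> \<Gamma> i j k = 0) \<and>
      (\<forall>i<n. \<forall>j<n. \<forall>l<n. (\<Sum>k<n. \<Gamma> i j k * G k l) = koszul n C G i j l))"

text \<open>R(e_a,e_b)e_c = nabla_a nabla_b e_c - nabla_b nabla_a e_c - nabla_{[e_a,e_b]} e_c = sum_q riem a b c q e_q.\<close>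
definition riem :: "nat \<Rightarrow> (nat \<Rightarrow> nat \<Rightarrow> nat \<Rightarrow> real) \<Rightarrow> (nat \<Rightarrow> nat \<Rightarrow> real) \<Rightarrow> nat \<Rightarrow> nat \<Rightarrow> nat \<Rightarrow> nat \<Rightarrow> real" where
  "riem n C G a b c q = (let \<Gamma> = levi_civita n C G in
     (\<Sum>p<n. \<Gamma> b c p * \<Gamma> a p q - \<Gamma> a c p * \<Gamma> b p q - C a b p * \<Gamma> p c q))"

text \<open>ric(y,z) = tr(x \<mapsto> R(x,y)z).\<close>
definition ricci_tensor :: "nat \<Rightarrow> (nat \<Rightarrow> nat \<Rightarrow> nat \<Rightarrow> real) \<Rightarrow> (nat \<Rightarrow> nat \<Rightarrow> real) \<Rightarrow> nat \<Rightarrow> nat \<Rightarrow> real" where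
  "ricci_tensor n C G b c = (\<Sum>a<n. riem n C G a b c a)"

text \<open>Ricci operator: g(Ric e_b, e_c) = ric(e_b,e_c), Ric e_b = sum_q Q b q e_q.\<close>
definition ricci_operator :: "nat \<Rightarrow> (nat \<Rightarrow> nat \<Rightarrow> nat \<Rightarrow> real) \<Rightarrow> (nat \<Rightarrow> nat \<Rightarrow> real) \<Rightarrow> nat \<Rightarrow> nat \<Rightarrow> real" where
  "ricci_operator n C G = (THE Q. (\<forall>i j. \<not> (i < n \<and> j < n) \<longrightarrow> Q i j = 0) \<and>
      (\<forall>b<n. \<forall>c<n. (\<Sum>q<n. Q b q * G q c) = ricci_tensor n C G b c))"

end

theory Submission
  imports Defs
begin

text \<open>For a \<sigma>-diagonal metric g the Koszul formula can be solved explicitly, and on a nice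
  nilpotent Lie algebra almost all products of Christoffel symbols in the Ricci tensor vanish or
  cancel in pairs: nilpotency forbids 2-cycles in the diagram, and niceness makes the surviving
  products diagonal. What remains is Ric = 1/2 diag (M_\<Delta>^T X) for the \<sigma>-invariant, nowhere
  vanishing vector X (i, j, k) = c_ijk c_tilde_ijk g_k / (g_i g_j). So Ric = k/2 id is (K) for this X;
  its signs give (L_\<sigma>), and log |X| = log |c| + log |c \<circ> \<sigma>| + M_\<Delta> log |g| gives (P_\<sigma>), because
  the \<sigma>-invariant vectors of ker M_\<Delta>^T annihilate the last term.

  Conversely, (P_\<sigma>) and averaging over \<sigma> show that log |X| - log |c| - log |c \<circ> \<sigma>| is orthogonal
  to all of ker M_\<Delta>^T, so by the Fredholm alternative it equals M_\<Delta> y for a \<sigma>-invariant y. The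
  metric g = \<plusminus>exp y with signs \<delta> then reproduces X: its absolute values by construction and its
  signs by (L_\<sigma>).\<close>

section \<open>The Fredholm alternative for finite linear systems\<close>

definition in_column_span :: "'a set \<Rightarrow> 'b set \<Rightarrow> ('a \<Rightarrow> 'b \<Rightarrow> real) \<Rightarrow> ('a \<Rightarrow> real) \<Rightarrow> bool" where
  "in_column_span I J M v \<longleftrightarrow> (\<exists>y. \<forall>t\<in>I. v t = (\<Sum>l\<in>J. M t l * y l))"

definition in_left_kernel :: "'a set \<Rightarrow> 'b set \<Rightarrow> ('a \<Rightarrow> 'b \<Rightarrow> real) \<Rightarrow> ('a \<Rightarrow> real) \<Rightarrow> bool" where
  "in_left_kernel I J M a \<longleftrightarrow> (\<forall>l\<in>J. (\<Sum>t\<in>I. M t l * a t) = 0)"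

lemma left_kernel_orthogonal_column_span:
  assumes "in_left_kernel I J M a" and "in_column_span I J M v"
  shows "(\<Sum>t\<in>I. a t * v t) = 0"
proof -
  obtain y where y: "\<And>t. t \<in> I \<Longrightarrow> v t = (\<Sum>l\<in>J. M t l * y l)"
    using assms(2) unfolding in_column_span_def by blast
  have "(\<Sum>t\<in>I. a t * v t) = (\<Sum>l\<in>J. y l * (\<Sum>t\<in>I. M t l * a t))"
    by (simp add: y sum_distrib_left sum_distrib_right sum.swap[of _ I J] mult_ac)
  also have "\<dots> = 0"
    using assms(1) unfolding in_left_kernel_def by simp
  finally show ?thesis .
qed

lemma in_column_span_mono:
  assumes "in_column_span I J M v" and "J \<subseteq> J'" and "finite J'"
  shows "in_column_span I J' M v"
proof -
  obtain y where y: "\<And>t. t \<in> I \<Longrightarrow> v t = (\<Sum>l\<in>J. M t l * y l)"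
    using assms(1) unfolding in_column_span_def by blast
  have "v t = (\<Sum>l\<in>J'. M t l * (if l \<in> J then y l else 0))" if "t \<in> I" for t
    unfolding y[OF that] by (rule sum.mono_neutral_cong_left[OF assms(3,2)]) auto
  then show ?thesis
    unfolding in_column_span_def by (intro exI[of _ "\<lambda>l. if l \<in> J then y l else 0"]) blast
qed

lemma in_column_span_insert_shift:
  assumes "in_column_span I J M (\<lambda>t. v t - c * M t l)" and "l \<notin> J" and "finite J"
  shows "in_column_span I (insert l J) M v"
proof -
  obtain y where y: "\<And>t. t \<in> I \<Longrightarrow> v t - c * M t l = (\<Sum>l\<in>J. M t l * y l)"
    using assms(1) unfolding in_column_span_def by blast
  have "v t = (\<Sum>l'\<in>insert l J. M t l' * (y(l := c)) l')" if "t \<in> I" for t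
  proof -
    have "(\<Sum>l'\<in>J. M t l' * (y(l := c)) l') = (\<Sum>l'\<in>J. M t l' * y l')"
      using assms(2) by (intro sum.cong) auto
    then show ?thesis
      using assms(2,3) y[OF that] by (simp add: algebra_simps)
  qed
  then show ?thesis
    unfolding in_column_span_def by (intro exI[of _ "y(l := c)"]) blast
qed

lemma in_left_kernel_insert_dependent:
  assumes "in_left_kernel I J M a" and "in_column_span I J M (\<lambda>t. M t l)"
  shows "in_left_kernel I (insert l J) M a"
  using assms left_kernel_orthogonal_column_span[OF assms]
  unfolding in_left_kernel_def by (simp add: mult.commute)

lemma in_left_kernel_insert_exchange:
  fixes v :: "'a \<Rightarrow> real"
  assumes a: "in_left_kernel I J M a" and b: "in_left_kernel I J M b"
    and \<beta>: "(\<Sum>t\<in>I. b t * M t l) \<noteq> 0"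
  defines "c \<equiv> (\<Sum>t\<in>I. b t * v t) / (\<Sum>t\<in>I. b t * M t l)"
  shows "\<exists>a'. in_left_kernel I (insert l J) M a' \<and>
    (\<Sum>t\<in>I. a' t * v t) = (\<Sum>t\<in>I. a t * (v t - c * M t l))"
proof -
  define \<kappa> where "\<kappa> = (\<Sum>t\<in>I. a t * M t l) / (\<Sum>t\<in>I. b t * M t l)"
  define a' where "a' = (\<lambda>t. a t - \<kappa> * b t)"
  have a'_column: "(\<Sum>t\<in>I. M t l' * a' t) = (\<Sum>t\<in>I. M t l' * a t) - \<kappa> * (\<Sum>t\<in>I. M t l' * b t)"
    for l'
    unfolding a'_def by (simp add: algebra_simps sum_subtractf sum_distrib_left)
  have "(\<Sum>t\<in>I. M t l * a t) = \<kappa> * (\<Sum>t\<in>I. M t l * b t)"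
    using \<beta> unfolding \<kappa>_def by (simp add: mult_ac)
  then have "in_left_kernel I (insert l J) M a'"
    using a b a'_column unfolding in_left_kernel_def by simp
  moreover have "(\<Sum>t\<in>I. a' t * v t) = (\<Sum>t\<in>I. a t * v t) - \<kappa> * (\<Sum>t\<in>I. b t * v t)"
    unfolding a'_def by (simp add: algebra_simps sum_subtractf sum_distrib_left)
  moreover have "\<kappa> * (\<Sum>t\<in>I. b t * v t) = c * (\<Sum>t\<in>I. a t * M t l)"
    unfolding \<kappa>_def c_def by simp
  moreover have "(\<Sum>t\<in>I. a t * (v t - c * M t l)) = (\<Sum>t\<in>I. a t * v t) - c * (\<Sum>t\<in>I. a t * M t l)"
    by (simp add: algebra_simps sum_subtractf sum_distrib_left)
  ultimately show ?thesis
    by (intro exI[of _ a']) simp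
qed

lemma fredholm_alternative:
  assumes "finite I" and "finite J"
  shows "in_column_span I J M v \<or> (\<exists>a. in_left_kernel I J M a \<and> (\<Sum>t\<in>I. a t * v t) \<noteq> 0)"
  using assms(2)
proof (induction J arbitrary: v rule: finite_induct)
  case empty
  show ?case
  proof (cases "\<forall>t\<in>I. v t = 0")
    case True
    then show ?thesis
      unfolding in_column_span_def by simp
  next
    case False
    then have "(\<Sum>t\<in>I. v t * v t) \<noteq> 0"
      using sum_nonneg_eq_0_iff[OF assms(1), of "\<lambda>t. v t * v t"] by auto
    then show ?thesis
      unfolding in_left_kernel_def by (intro disjI2 exI[of _ v]) simp
  qed
next
  case (insert l J)
  from insert.IH[of "\<lambda>t. M t l"] consider
      (dependent) "in_column_span I J M (\<lambda>t. M t l)"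
    | (independent) b where "in_left_kernel I J M b" "(\<Sum>t\<in>I. b t * M t l) \<noteq> 0"
    by blast
  then show ?case
  proof cases
    case dependent
    from insert.IH[of v] show ?thesis
    proof (elim disjE exE conjE)
      assume "in_column_span I J M v"
      then show ?thesis
        using in_column_span_mono[OF _ subset_insertI finite.insertI[OF insert.hyps(1)]] by blast
    next
      fix a assume "in_left_kernel I J M a" "(\<Sum>t\<in>I. a t * v t) \<noteq> 0"
      then show ?thesis
        using in_left_kernel_insert_dependent[OF _ dependent] by (intro disjI2 exI[of _ a]) simp
    qed
  next
    case independent
    define c where "c = (\<Sum>t\<in>I. b t * v t) / (\<Sum>t\<in>I. b t * M t l)"
    from insert.IH[of "\<lambda>t. v t - c * M t l"] show ?thesis
    proof (elim disjE exE conjE)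
      assume "in_column_span I J M (\<lambda>t. v t - c * M t l)"
      then show ?thesis
        using in_column_span_insert_shift[OF _ insert.hyps(2,1)] by blast
    next
      fix a assume "in_left_kernel I J M a" "(\<Sum>t\<in>I. a t * (v t - c * M t l)) \<noteq> 0"
      then show ?thesis
        using in_left_kernel_insert_exchange[OF _ independent, of a v] unfolding c_def by auto
    qed
  qed
qed

lemma in_column_span_if_orthogonal_left_kernel:
  assumes "finite I" and "finite J"
    and "\<And>a. in_left_kernel I J M a \<Longrightarrow> (\<Sum>t\<in>I. a t * v t) = 0"
  shows "in_column_span I J M v"
  using fredholm_alternative[OF assms(1,2)] assms(3) by blast

section \<open>Nice nilpotent Lie algebras with a diagram involution\<close>

definition scaled_unit :: "real \<Rightarrow> nat \<Rightarrow> nat \<Rightarrow> real" where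
  "scaled_unit c u = (\<lambda>h. if h = u then c else 0)"

locale nice_lie =
  fixes n :: nat and C :: "nat \<Rightarrow> nat \<Rightarrow> nat \<Rightarrow> real"
  assumes nice: "nice_lie_algebra n C"
begin

lemma is_lie_algebra: "lie_algebra n C"
  using nice unfolding nice_lie_algebra_def by simp

lemma bracket_eq_0_outside: "\<not> (i < n \<and> j < n \<and> h < n) \<Longrightarrow> C i j h = 0"
proof -
  have "\<forall>i j h. \<not> (i < n \<and> j < n \<and> h < n) \<longrightarrow> C i j h = 0"
    using is_lie_algebra unfolding lie_algebra_def by (rule conjunct1)
  then show "\<not> (i < n \<and> j < n \<and> h < n) \<Longrightarrow> C i j h = 0" by blast
qed

lemma bracket_nonzero_dest: "C i j h \<noteq> 0 \<Longrightarrow> i < n \<and> j < n \<and> h < n"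
  using bracket_eq_0_outside by blast

lemma bracket_antisym: "C i j h = - C j i h"
proof -
  have "\<forall>i j h. C i j h = - C j i h"
    using is_lie_algebra unfolding lie_algebra_def by (elim conjE)
  then show ?thesis by blast
qed

lemma bracket_self: "C i i h = 0"
  using bracket_antisym[of i i h] by simp

lemma nice_target_unique: "C i j h \<noteq> 0 \<Longrightarrow> C i j h' \<noteq> 0 \<Longrightarrow> h = h'"
proof -
  assume "C i j h \<noteq> 0" "C i j h' \<noteq> 0"
  moreover have "\<forall>i<n. \<forall>j<n. \<forall>h<n. \<forall>h'<n. C i j h \<noteq> 0 \<longrightarrow> C i j h' \<noteq> 0 \<longrightarrow> h = h'"
    using nice unfolding nice_lie_algebra_def by (elim conjE)
  ultimately show "h = h'"
    using bracket_nonzero_dest by blast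
qed

lemma nice_source_unique: "C i h j \<noteq> 0 \<Longrightarrow> C i h' j \<noteq> 0 \<Longrightarrow> h = h'"
proof -
  assume "C i h j \<noteq> 0" "C i h' j \<noteq> 0"
  moreover have "\<forall>i<n. \<forall>j<n. \<forall>h<n. \<forall>h'<n. dcoef C i h j \<noteq> 0 \<longrightarrow> dcoef C i h' j \<noteq> 0 \<longrightarrow> h = h'"
    using nice unfolding nice_lie_algebra_def by (elim conjE)
  ultimately show "h = h'"
    using bracket_nonzero_dest unfolding dcoef_def by (metis neg_equal_0_iff_equal)
qed

lemma lie_bracket_scaled_unit:
  assumes "C x u v \<noteq> 0"
  shows "lie_bracket n C (scaled_unit 1 x) (scaled_unit c u) = scaled_unit (c * C x u v) v"
proof
  fix h
  have "x < n" "u < n"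
    using bracket_nonzero_dest[OF assms] by auto
  have "lie_bracket n C (scaled_unit 1 x) (scaled_unit c u) h
      = (\<Sum>i<n. \<Sum>j<n. (if i = x then 1 else 0) * (if j = u then c else 0) * C i j h)"
    by (simp add: lie_bracket_def scaled_unit_def)
  also have "\<dots> = (\<Sum>i<n. if i = x then (\<Sum>j<n. (if j = u then c else 0) * C i j h) else 0)"
    by (intro sum.cong) auto
  also have "\<dots> = (\<Sum>j<n. (if j = u then c else 0) * C x j h)"
    using \<open>x < n\<close> by simp
  also have "\<dots> = (\<Sum>j<n. if j = u then c * C x j h else 0)"
    by (intro sum.cong) auto
  also have "\<dots> = c * C x u h"
    using \<open>u < n\<close> by simp
  also have "\<dots> = scaled_unit (c * C x u v) v h"
    using nice_target_unique[OF assms, of h] by (auto simp: scaled_unit_def)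
  finally show "lie_bracket n C (scaled_unit 1 x) (scaled_unit c u) h = scaled_unit (c * C x u v) v h" .
qed

lemma iterated_bracket_two_cycle:
  assumes "C x u v \<noteq> 0" and "C y v u \<noteq> 0"
  shows "foldr (lie_bracket n C) (concat (replicate m [scaled_unit 1 y, scaled_unit 1 x])) (scaled_unit 1 u)
    = scaled_unit ((C x u v * C y v u) ^ m) u"
proof (induction m)
  case 0
  then show ?case by simp
next
  case (Suc m)
  then show ?case
    using lie_bracket_scaled_unit[OF assms(1)] lie_bracket_scaled_unit[OF assms(2)] by (simp add: mult_ac)
qed

end

locale nice_nilpotent_lie = nice_lie +
  assumes nilpotent: "nilpotent_lie n C"
begin

text \<open>Arrows u -x-> v and v -y-> u would make e_u an eigenvector of ad(e_y) ad(e_x) with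
  nonzero eigenvalue, contradicting nilpotency.\<close>

lemma no_two_cycle: "C x u v * C y v u = 0"
proof (rule ccontr)
  assume "C x u v * C y v u \<noteq> 0"
  then have xuv: "C x u v \<noteq> 0" and yvu: "C y v u \<noteq> 0"
    by auto
  obtain N where N: "\<And>xs z. length xs = N \<Longrightarrow> \<forall>h<n. foldr (lie_bracket n C) xs z h = 0"
    using nilpotent unfolding nilpotent_lie_def by blast
  define xs where "xs = concat (replicate N [scaled_unit 1 y, scaled_unit 1 x])"
  have "length xs = N + N"
    unfolding xs_def by (simp add: length_concat sum_list_replicate)
  then have "foldr (lie_bracket n C) (take N xs) (foldr (lie_bracket n C) (drop N xs) (scaled_unit 1 u)) u = 0"
    using N[of "take N xs"] bracket_nonzero_dest[OF xuv] by simp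
  then have "foldr (lie_bracket n C) xs (scaled_unit 1 u) u = 0"
    by (metis append_take_drop_id foldr_append comp_apply)
  then have "(C x u v * C y v u) ^ N = 0"
    unfolding xs_def iterated_bracket_two_cycle[OF xuv yvu] by (simp add: scaled_unit_def)
  then show False
    using xuv yvu by simp
qed

lemma no_loop: "C x u u = 0"
  using no_two_cycle[of x u u x] by simp

end

locale nice_nilpotent_involution = nice_nilpotent_lie +
  fixes \<sigma> :: "nat \<Rightarrow> nat"
  assumes involution: "diagram_involution n C \<sigma>"
begin

lemma sigma_less: "i < n \<Longrightarrow> \<sigma> i < n"
  using involution unfolding diagram_involution_def by blast

lemma sigma_sigma: "i < n \<Longrightarrow> \<sigma> (\<sigma> i) = i"
  using involution unfolding diagram_involution_def by blast

lemma sigma_eq_iff: "i < n \<Longrightarrow> j < n \<Longrightarrow> \<sigma> i = \<sigma> j \<longleftrightarrow> i = j"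
  using sigma_sigma by metis

lemma bracket_sigma_nonzero_iff:
  "i < n \<Longrightarrow> j < n \<Longrightarrow> k < n \<Longrightarrow> C (\<sigma> i) (\<sigma> j) (\<sigma> k) \<noteq> 0 \<longleftrightarrow> C i j k \<noteq> 0"
  using involution unfolding diagram_involution_def by blast

lemma bracket_sigma_nonzero: "C i j k \<noteq> 0 \<Longrightarrow> C (\<sigma> i) (\<sigma> j) (\<sigma> k) \<noteq> 0"
  using bracket_sigma_nonzero_iff bracket_nonzero_dest by blast

lemma sum_sigma_reindex: "(\<Sum>a<n. f (\<sigma> a)) = (\<Sum>a<n. f a)"
  by (rule sum.reindex_bij_witness[where i=\<sigma> and j=\<sigma>]) (auto simp: sigma_sigma sigma_less)

lemma double_sum_sigma_swap: "(\<Sum>a<n. \<Sum>p<n. f (\<sigma> p) (\<sigma> a)) = (\<Sum>a<n. \<Sum>p<n. f a p)"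
proof -
  have "(\<Sum>a<n. \<Sum>p<n. f (\<sigma> p) (\<sigma> a)) = (\<Sum>a<n. \<Sum>p<n. f p (\<sigma> a))"
    using sum_sigma_reindex[of "\<lambda>p. f p (\<sigma> a)" for a] by simp
  also have "\<dots> = (\<Sum>a<n. \<Sum>p<n. f p a)"
    by (rule sum_sigma_reindex)
  also have "\<dots> = (\<Sum>a<n. \<Sum>p<n. f a p)"
    by (rule sum.swap)
  finally show ?thesis .
qed

lemma nice_sigma_source: "C i h j \<noteq> 0 \<Longrightarrow> C (\<sigma> i) h' (\<sigma> j) \<noteq> 0 \<Longrightarrow> h' = \<sigma> h"
  using nice_source_unique bracket_sigma_nonzero by blast

lemma nice_sigma_target: "C i j k \<noteq> 0 \<Longrightarrow> C (\<sigma> i) (\<sigma> j) k' \<noteq> 0 \<Longrightarrow> k' = \<sigma> k"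
  using nice_target_unique bracket_sigma_nonzero by blast

lemma products_vanish_unless_sigma_pair:
  assumes "a < n" "p < n" "b < n" "c < n" and "c \<noteq> \<sigma> b"
  shows "C a c p * C (\<sigma> a) b (\<sigma> p) = 0" "C (\<sigma> p) c (\<sigma> a) * C b p a = 0"
    "C (\<sigma> p) a (\<sigma> c) * C (\<sigma> a) p (\<sigma> b) = 0" "C a b p * C (\<sigma> a) c (\<sigma> p) = 0"
proof -
  show "C a c p * C (\<sigma> a) b (\<sigma> p) = 0"
    using nice_sigma_source[of a c p b] assms(4,5) sigma_sigma by fastforce
  show "C (\<sigma> p) c (\<sigma> a) * C b p a = 0"
    using nice_sigma_source[of p b a c] assms(5) bracket_antisym[of b p a] by fastforce
  show "C (\<sigma> p) a (\<sigma> c) * C (\<sigma> a) p (\<sigma> b) = 0"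
    using nice_sigma_target[of "\<sigma> a" p "\<sigma> b" "\<sigma> c"] assms sigma_sigma
      bracket_antisym[of a "\<sigma> p" "\<sigma> c"] by fastforce
  show "C a b p * C (\<sigma> a) c (\<sigma> p) = 0"
    using nice_sigma_source[of a b p c] assms(5) by fastforce
qed

end

lemma sum_subset_cube:
  assumes "S \<subseteq> {..<n} \<times> {..<n} \<times> {..<n::nat}"
  shows "(\<Sum>t\<in>S. f t) = (\<Sum>i<n. \<Sum>j<n. \<Sum>k<n. if (i, j, k) \<in> S then f (i, j, k) else 0)"
proof -
  have "(\<Sum>t\<in>S. f t) = (\<Sum>t\<in>{..<n} \<times> {..<n} \<times> {..<n}. if t \<in> S then f t else 0)"
    using assms by (simp add: sum.inter_restrict[symmetric] Int_absorb1)
  then show ?thesis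
    by (simp add: sum.cartesian_product)
qed

lemma double_sum_symmetric:
  fixes H :: "nat \<Rightarrow> nat \<Rightarrow> 'a::comm_monoid_add"
  assumes "\<And>i j. H i j = H j i" and "\<And>i. H i i = 0"
  shows "(\<Sum>i<n. \<Sum>j<n. H i j) = (\<Sum>i<n. \<Sum>j<n. if i < j then H i j else 0) + (\<Sum>i<n. \<Sum>j<n. if i < j then H i j else 0)"
proof -
  have "(\<Sum>i<n. \<Sum>j<n. H i j)
      = (\<Sum>i<n. \<Sum>j<n. if i < j then H i j else 0) + (\<Sum>i<n. \<Sum>j<n. if j < i then H i j else 0)"
    unfolding sum.distrib[symmetric] by (intro sum.cong refl) (auto simp: assms(2))
  also have "(\<Sum>i<n. \<Sum>j<n. if j < i then H i j else 0) = (\<Sum>j<n. \<Sum>i<n. if j < i then H i j else 0)"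
    by (rule sum.swap)
  also have "\<dots> = (\<Sum>i<n. \<Sum>j<n. if i < j then H i j else 0)"
    by (intro sum.cong refl) (metis assms(1))
  finally show ?thesis .
qed

lemma root_matrix_sum:
  fixes y :: "nat \<Rightarrow> 'a::comm_ring_1"
  assumes "i < n" "j < n" "k < n"
  shows "(\<Sum>l<n. of_int (root_matrix (i, j, k) l) * y l) = y k - y i - y j"
proof -
  have "of_int (root_matrix (i, j, k) l) * y l
      = (if l = k then y l else 0) - (if l = i then y l else 0) - (if l = j then y l else 0)" for l
    by (simp add: root_matrix_def algebra_simps)
  then show ?thesis
    using assms by (simp add: sum_subtractf)
qed

lemma root_matrix2_mult_cong: "\<forall>l<n. \<delta> l = \<delta>' l \<Longrightarrow> root_matrix2_mult n \<delta> = root_matrix2_mult n \<delta>'"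
  unfolding root_matrix2_mult_def by (intro ext arg_cong[where f="\<lambda>x. x mod 2"] sum.cong) auto

lemma struct_const_eq: "struct_const C (i, j, k) = - C i j k"
  unfolding struct_const_def dcoef_def by simp

context nice_lie
begin

lemma arrows_subset_cube: "arrows n C \<subseteq> {..<n} \<times> {..<n} \<times> {..<n}"
  unfolding arrows_def by auto

lemma finite_arrows: "finite (arrows n C)"
  using arrows_subset_cube finite_subset by blast

text \<open>Each arrow appears twice in the triple sum, once as (i, j, k) and once as (j, i, k).\<close>

lemma sum_arrows_eq_half_triple_sum:
  fixes F :: "nat \<times> nat \<times> nat \<Rightarrow> real"
  assumes "\<And>i j k. F (i, j, k) = F (j, i, k)" and "\<And>i j k. C i j k = 0 \<Longrightarrow> F (i, j, k) = 0"
  shows "(\<Sum>t\<in>arrows n C. F t) = (\<Sum>i<n. \<Sum>j<n. \<Sum>k<n. F (i, j, k)) / 2"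
proof -
  have F_if: "(if C i j k \<noteq> 0 then F (i, j, k) else 0) = F (i, j, k)" for i j k
    using assms(2) by auto
  have "(\<Sum>t\<in>arrows n C. F t) = (\<Sum>i<n. \<Sum>j<n. if i < j then (\<Sum>k<n. F (i, j, k)) else 0)"
    unfolding sum_subset_cube[OF arrows_subset_cube]
    by (intro sum.cong refl) (auto simp: arrows_def F_if)
  also have "\<dots> = (\<Sum>i<n. \<Sum>j<n. \<Sum>k<n. F (i, j, k)) / 2"
    using double_sum_symmetric[of "\<lambda>i j. \<Sum>k<n. F (i, j, k)" n] assms bracket_self by simp
  finally show ?thesis .
qed

lemma struct_const_nonzero: "t \<in> arrows n C \<Longrightarrow> struct_const C t \<noteq> 0"
  by (auto simp: arrows_def struct_const_eq)

lemma c_tilde_eq: "c_tilde \<sigma> C (i, j, k) = - C (\<sigma> i) (\<sigma> j) (\<sigma> k)"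
  unfolding c_tilde_def struct_const_def dcoef_def using bracket_antisym[of "\<sigma> j" "\<sigma> i" "\<sigma> k"] by simp

end

context nice_nilpotent_involution
begin

lemma sigma_act_eq: "sigma_act \<sigma> (i, j, k) = (min (\<sigma> i) (\<sigma> j), max (\<sigma> i) (\<sigma> j), \<sigma> k)"
  unfolding sigma_act_def by simp

lemma sigma_act_arrow:
  assumes "t \<in> arrows n C"
  shows "sigma_act \<sigma> t \<in> arrows n C"
proof -
  obtain i j k where t: "t = (i, j, k)" and ijk: "i < j" "j < n" "k < n" "C i j k \<noteq> 0"
    using assms unfolding arrows_def by auto
  have "\<sigma> i \<noteq> \<sigma> j"
    using sigma_eq_iff[of i j] ijk by simp
  moreover have "C (\<sigma> i) (\<sigma> j) (\<sigma> k) \<noteq> 0" "C (\<sigma> j) (\<sigma> i) (\<sigma> k) \<noteq> 0"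
    using bracket_sigma_nonzero[OF ijk(4)] bracket_antisym[of "\<sigma> j" "\<sigma> i" "\<sigma> k"] by auto
  ultimately show ?thesis
    using t ijk sigma_less by (auto simp: arrows_def sigma_act_eq min_def max_def)
qed

lemma sigma_act_sigma_act:
  assumes "t \<in> arrows n C"
  shows "sigma_act \<sigma> (sigma_act \<sigma> t) = t"
proof -
  obtain i j k where t: "t = (i, j, k)" and ijk: "i < j" "j < n" "k < n"
    using assms unfolding arrows_def by auto
  then show ?thesis
    using sigma_sigma[of i] sigma_sigma[of j] sigma_sigma[of k]
    by (cases "\<sigma> i < \<sigma> j") (auto simp: sigma_act_eq min_def max_def)
qed

lemma sum_arrows_sigma_act: "(\<Sum>t\<in>arrows n C. f (sigma_act \<sigma> t)) = (\<Sum>t\<in>arrows n C. f t)"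
  by (rule sum.reindex_bij_witness[where i="sigma_act \<sigma>" and j="sigma_act \<sigma>"])
    (auto simp: sigma_act_sigma_act sigma_act_arrow)

lemma root_matrix_sigma_act:
  assumes "t \<in> arrows n C" and "l < n"
  shows "root_matrix (sigma_act \<sigma> t) l = root_matrix t (\<sigma> l)"
proof -
  obtain i j k where t: "t = (i, j, k)" and ijk: "i < j" "j < n" "k < n"
    using assms(1) unfolding arrows_def by auto
  have "l = \<sigma> x \<longleftrightarrow> \<sigma> l = x" if "x < n" for x
    using sigma_sigma that assms(2) by metis
  from this[of i] this[of j] this[of k] show ?thesis
    using t ijk by (cases "\<sigma> i < \<sigma> j") (auto simp: sigma_act_eq root_matrix_def min_def max_def)
qed

lemma abs_struct_const_sigma_act:
  "\<bar>struct_const C (sigma_act \<sigma> (i, j, k))\<bar> = \<bar>C (\<sigma> i) (\<sigma> j) (\<sigma> k)\<bar>"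
  using bracket_antisym[of "\<sigma> j" "\<sigma> i" "\<sigma> k"]
  by (cases "\<sigma> i < \<sigma> j") (auto simp: sigma_act_eq struct_const_eq min_def max_def)

lemma sum_ln_abs_struct_const_sigma_act:
  assumes "\<forall>t\<in>arrows n C. a (sigma_act \<sigma> t) = a t"
  shows "(\<Sum>t\<in>arrows n C. a t * ln \<bar>struct_const C (sigma_act \<sigma> t)\<bar>) = (\<Sum>t\<in>arrows n C. a t * ln \<bar>struct_const C t\<bar>)"
proof -
  have "(\<Sum>t\<in>arrows n C. a t * ln \<bar>struct_const C (sigma_act \<sigma> t)\<bar>)
      = (\<Sum>t\<in>arrows n C. a (sigma_act \<sigma> t) * ln \<bar>struct_const C (sigma_act \<sigma> t)\<bar>)"
    using assms by (intro sum.cong refl) simp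
  also have "\<dots> = (\<Sum>t\<in>arrows n C. a t * ln \<bar>struct_const C t\<bar>)"
    by (rule sum_arrows_sigma_act)
  finally show ?thesis .
qed

end

section \<open>The Ricci operator of a \<sigma>-diagonal metric\<close>

locale sigma_diagonal_metric = nice_nilpotent_involution +
  fixes g :: "nat \<Rightarrow> real"
  assumes sigma_diagonal: "sigma_diagonal n \<sigma> g"
begin

abbreviation gram :: "nat \<Rightarrow> nat \<Rightarrow> real" where
  "gram \<equiv> sdiag_metric \<sigma> g"

lemma metric_nonzero: "i < n \<Longrightarrow> g i \<noteq> 0"
  using sigma_diagonal unfolding sigma_diagonal_def by blast

lemma metric_sigma: "i < n \<Longrightarrow> g (\<sigma> i) = g i"
  using sigma_diagonal unfolding sigma_diagonal_def by blast

lemma sum_mult_gram: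
  assumes "l < n"
  shows "(\<Sum>k<n. f k * gram k l) = f (\<sigma> l) * g (\<sigma> l)"
proof -
  have "(\<Sum>k<n. f k * gram k l) = (\<Sum>k<n. if k = \<sigma> l then f k * g k else 0)"
    using assms sigma_sigma by (intro sum.cong refl) (auto simp: sdiag_metric_def)
  then show ?thesis
    using sigma_less[OF assms] by simp
qed

text \<open>christoffel i j k is the coefficient of e_k in \<nabla>_{e_i} e_j, obtained by solving the Koszul
  formula with g(e_k, e_l) = g_k if l = \<sigma> k and 0 otherwise.\<close>

definition christoffel :: "nat \<Rightarrow> nat \<Rightarrow> nat \<Rightarrow> real" where
  "christoffel i j k = (if i < n \<and> j < n \<and> k < n then
      (C i j k + C (\<sigma> k) j (\<sigma> i) * g i / g k + C (\<sigma> k) i (\<sigma> j) * g j / g k) / 2 else 0)"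

lemma christoffel_eq:
  "i < n \<Longrightarrow> j < n \<Longrightarrow> k < n \<Longrightarrow>
    christoffel i j k = (C i j k + C (\<sigma> k) j (\<sigma> i) * g i / g k + C (\<sigma> k) i (\<sigma> j) * g j / g k) / 2"
  unfolding christoffel_def by simp

lemma koszul_eq:
  assumes "i < n" "j < n" "l < n"
  shows "koszul n C gram i j l = christoffel i j (\<sigma> l) * g (\<sigma> l)"
proof -
  have "koszul n C gram i j l
      = (C i j (\<sigma> l) * g (\<sigma> l) - C j l (\<sigma> i) * g (\<sigma> i) + C l i (\<sigma> j) * g (\<sigma> j)) / 2"
    unfolding koszul_def using assms by (simp add: sum_mult_gram)
  also have "\<dots> = (C i j (\<sigma> l) * g (\<sigma> l) + C l j (\<sigma> i) * g i + C l i (\<sigma> j) * g j) / 2"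
    using assms bracket_antisym[of l j "\<sigma> i"] by (simp add: metric_sigma)
  also have "\<dots> = christoffel i j (\<sigma> l) * g (\<sigma> l)"
    using assms metric_nonzero[OF sigma_less[OF assms(3)]]
    by (simp add: christoffel_def sigma_less sigma_sigma field_simps)
  finally show ?thesis .
qed

lemma levi_civita_eq: "levi_civita n C gram = christoffel"
  unfolding levi_civita_def
proof (rule the_equality)
  show "(\<forall>i j k. \<not> (i < n \<and> j < n \<and> k < n) \<longrightarrow> christoffel i j k = 0) \<and>
    (\<forall>i<n. \<forall>j<n. \<forall>l<n. (\<Sum>k<n. christoffel i j k * gram k l) = koszul n C gram i j l)"
  proof
    show "\<forall>i<n. \<forall>j<n. \<forall>l<n. (\<Sum>k<n. christoffel i j k * gram k l) = koszul n C gram i j l"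
      using sum_mult_gram koszul_eq by simp
  qed (simp add: christoffel_def)
next
  fix \<Gamma>
  assume \<Gamma>: "(\<forall>i j k. \<not> (i < n \<and> j < n \<and> k < n) \<longrightarrow> \<Gamma> i j k = 0) \<and>
    (\<forall>i<n. \<forall>j<n. \<forall>l<n. (\<Sum>k<n. \<Gamma> i j k * gram k l) = koszul n C gram i j l)"
  have "\<Gamma> i j k = christoffel i j k" for i j k
  proof (cases "i < n \<and> j < n \<and> k < n")
    case True
    then have "(\<Sum>k'<n. \<Gamma> i j k' * gram k' (\<sigma> k)) = koszul n C gram i j (\<sigma> k)"
      using \<Gamma> sigma_less by blast
    then have "\<Gamma> i j k * g k = christoffel i j k * g k"
      using True sigma_less[of k] sum_mult_gram[of "\<sigma> k" "\<Gamma> i j"] koszul_eq[of i j "\<sigma> k"]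
      by (simp add: sigma_sigma)
    then show ?thesis
      using metric_nonzero True by simp
  next
    case False
    then show ?thesis
      using \<Gamma> by (auto simp: christoffel_def)
  qed
  then show "\<Gamma> = christoffel"
    by (intro ext)
qed

text \<open>The diagonal terms vanish because the diagram has no loop; the others cancel in pairs
  under a \<mapsto> \<sigma> a.\<close>

lemma christoffel_trace:
  assumes "p < n"
  shows "(\<Sum>a<n. christoffel a p a) = 0"
proof -
  define S where "S = (\<Sum>a<n. C (\<sigma> a) a (\<sigma> p) * g p / g a)"
  have "C a p a = 0" "C (\<sigma> a) p (\<sigma> a) = 0" for a
    using bracket_antisym no_loop by (metis neg_equal_0_iff_equal)+
  then have "(\<Sum>a<n. christoffel a p a) = S / 2"
    using assms unfolding S_def by (simp add: christoffel_def sum_divide_distrib)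
  moreover have "S = - S"
  proof -
    have "S = (\<Sum>a<n. C (\<sigma> (\<sigma> a)) (\<sigma> a) (\<sigma> p) * g p / g (\<sigma> a))"
      unfolding S_def by (rule sum_sigma_reindex[symmetric])
    also have "\<dots> = (\<Sum>a<n. - (C (\<sigma> a) a (\<sigma> p) * g p / g a))"
      by (intro sum.cong refl) (auto simp: sigma_sigma metric_sigma bracket_antisym[of "\<sigma> x" x for x])
    finally show ?thesis
      unfolding S_def by (simp add: sum_negf)
  qed
  ultimately show ?thesis
    by simp
qed

text \<open>The vector X of the theorem associated with the metric g.\<close>

definition weight :: "nat \<times> nat \<times> nat \<Rightarrow> real" where
  "weight t = (case t of (i, j, k) \<Rightarrow> C i j k * C (\<sigma> i) (\<sigma> j) (\<sigma> k) * g k / (g i * g j))"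

lemma weight_eq: "weight (i, j, k) = C i j k * C (\<sigma> i) (\<sigma> j) (\<sigma> k) * g k / (g i * g j)"
  unfolding weight_def by simp

lemma weight_eq_0: "C i j k = 0 \<Longrightarrow> weight (i, j, k) = 0"
  by (simp add: weight_eq)

lemma weight_swap: "weight (i, j, k) = weight (j, i, k)"
  unfolding weight_eq using bracket_antisym[of i j k] bracket_antisym[of "\<sigma> i" "\<sigma> j" "\<sigma> k"]
  by (simp add: mult_ac)

lemma weight_sigma: "i < n \<Longrightarrow> j < n \<Longrightarrow> k < n \<Longrightarrow> weight (\<sigma> i, \<sigma> j, \<sigma> k) = weight (i, j, k)"
  unfolding weight_eq by (simp add: sigma_sigma metric_sigma mult_ac)

definition ricci_eigenvalue :: "nat \<Rightarrow> real" where
  "ricci_eigenvalue b = (\<Sum>i<n. \<Sum>j<n. weight (i, j, b)) / 4 - (\<Sum>j<n. \<Sum>k<n. weight (b, j, k)) / 2"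

lemma ricci_tensor_eq_sum:
  "ricci_tensor n C gram b c
    = (\<Sum>a<n. \<Sum>p<n. - christoffel a c p * christoffel b p a - C a b p * christoffel p c a)"
proof -
  have "(\<Sum>a<n. \<Sum>p<n. christoffel b c p * christoffel a p a)
      = (\<Sum>p<n. christoffel b c p * (\<Sum>a<n. christoffel a p a))"
    by (subst sum.swap) (simp add: sum_distrib_left)
  also have "\<dots> = 0"
    by (simp add: christoffel_trace)
  finally have "(\<Sum>a<n. \<Sum>p<n. christoffel b c p * christoffel a p a) = 0" .
  then show ?thesis
    unfolding ricci_tensor_def riem_def Let_def levi_civita_eq
    by (simp add: sum.distrib sum_subtractf sum_negf algebra_simps)
qed

end

text \<open>Write \<Gamma>_acp = (x0 + x1 + x2)/2, \<Gamma>_bpa = (y0 + y1 + y2)/2, \<Gamma>_pca = (w0 + w1 + w2)/2 for the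
  three terms of christoffel, and z = C a b p. Of the twelve products in a summand of the Ricci
  tensor, x0 y0, x1 y2 and z w0 vanish since the diagram has no 2-cycles; x0 y2, x1 y0, x2 y1 and
  z w1 vanish unless c = \<sigma> b, by niceness; the remaining five cancel after summation over a, p.\<close>

lemma christoffel_product_regroup:
  fixes x0 x1 x2 y0 y1 y2 z w0 w1 w2 :: real
  shows "- ((x0 + x1 + x2) / 2) * ((y0 + y1 + y2) / 2) - z * ((w0 + w1 + w2) / 2) =
    (- (x0 * y0 + x0 * y2 + x1 * y0 + x1 * y2 + x2 * y1) / 4 - (z * w0 + z * w1) / 2)
    - ((x0 + x1) * y1) / 4 - (x2 * (y0 + y2) + 2 * (z * w2)) / 4"
  by (simp add: field_simps)

context sigma_diagonal_metric
begin

lemma ricci_cancel_sigma_swap: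
  "(\<Sum>a<n. \<Sum>p<n. (C a c p + C (\<sigma> p) c (\<sigma> a) * g a / g p) * (C (\<sigma> a) p (\<sigma> b) * g b / g a)) = 0"
proof -
  have "(\<Sum>a<n. \<Sum>p<n. C (\<sigma> p) c (\<sigma> a) * g a / g p * (C (\<sigma> a) p (\<sigma> b) * g b / g a))
      = (\<Sum>a<n. \<Sum>p<n. - (C a c p * (C (\<sigma> a) p (\<sigma> b) * g b / g a)))"
    unfolding double_sum_sigma_swap[symmetric, of "\<lambda>a p. C (\<sigma> p) c (\<sigma> a) * g a / g p * (C (\<sigma> a) p (\<sigma> b) * g b / g a)"]
    using bracket_antisym[of p "\<sigma> a" "\<sigma> b" for a p] metric_nonzero
    by (intro sum.cong refl) (simp add: sigma_sigma metric_sigma sigma_less)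
  moreover have "(\<Sum>a<n. \<Sum>p<n. (C a c p + C (\<sigma> p) c (\<sigma> a) * g a / g p) * (C (\<sigma> a) p (\<sigma> b) * g b / g a))
      = (\<Sum>a<n. \<Sum>p<n. C a c p * (C (\<sigma> a) p (\<sigma> b) * g b / g a))
      + (\<Sum>a<n. \<Sum>p<n. C (\<sigma> p) c (\<sigma> a) * g a / g p * (C (\<sigma> a) p (\<sigma> b) * g b / g a))"
    by (simp only: distrib_right sum.distrib)
  ultimately show ?thesis
    by (simp add: sum_negf)
qed

lemma ricci_cancel_swap:
  "(\<Sum>a<n. \<Sum>p<n. C (\<sigma> p) a (\<sigma> c) * g c / g p * (C b p a + C (\<sigma> a) b (\<sigma> p) * g p / g a)
      + 2 * (C a b p * (C (\<sigma> a) p (\<sigma> c) * g c / g a))) = 0"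
proof -
  define W where "W a p = C (\<sigma> p) a (\<sigma> c) * g c / g p * C b p a" for a p
  have "(\<Sum>a<n. \<Sum>p<n. C (\<sigma> p) a (\<sigma> c) * g c / g p * (C (\<sigma> a) b (\<sigma> p) * g p / g a))
      = (\<Sum>a<n. \<Sum>p<n. W a p)"
    unfolding double_sum_sigma_swap[symmetric, of "\<lambda>a p. C (\<sigma> p) a (\<sigma> c) * g c / g p * (C (\<sigma> a) b (\<sigma> p) * g p / g a)"]
    unfolding W_def using bracket_antisym[of a "\<sigma> p" "\<sigma> c" for a p] bracket_antisym[of p b a for a p] metric_nonzero
    by (intro sum.cong refl) (simp add: sigma_sigma metric_sigma sigma_less)
  moreover have "(\<Sum>a<n. \<Sum>p<n. C a b p * (C (\<sigma> a) p (\<sigma> c) * g c / g a)) = - (\<Sum>a<n. \<Sum>p<n. W a p)"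
    unfolding W_def using bracket_antisym[of p b a for a p]
    by (subst sum.swap) (simp add: sum_negf mult_ac)
  moreover have "(\<Sum>a<n. \<Sum>p<n. C (\<sigma> p) a (\<sigma> c) * g c / g p * (C b p a + C (\<sigma> a) b (\<sigma> p) * g p / g a)
      + 2 * (C a b p * (C (\<sigma> a) p (\<sigma> c) * g c / g a)))
    = (\<Sum>a<n. \<Sum>p<n. W a p)
      + (\<Sum>a<n. \<Sum>p<n. C (\<sigma> p) a (\<sigma> c) * g c / g p * (C (\<sigma> a) b (\<sigma> p) * g p / g a))
      + 2 * (\<Sum>a<n. \<Sum>p<n. C a b p * (C (\<sigma> a) p (\<sigma> c) * g c / g a))"
    unfolding W_def by (simp only: distrib_left sum.distrib sum_distrib_left)
  ultimately show ?thesis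
    by simp
qed

lemma ricci_surviving_terms:
  assumes "a < n" "p < n" "b < n" "c < n"
  shows "- (C a c p * C b p a + C a c p * (C (\<sigma> a) b (\<sigma> p) * g p / g a)
        + C (\<sigma> p) c (\<sigma> a) * g a / g p * C b p a
        + C (\<sigma> p) c (\<sigma> a) * g a / g p * (C (\<sigma> a) b (\<sigma> p) * g p / g a)
        + C (\<sigma> p) a (\<sigma> c) * g c / g p * (C (\<sigma> a) p (\<sigma> b) * g b / g a)) / 4
      - (C a b p * C p c a + C a b p * (C (\<sigma> a) c (\<sigma> p) * g p / g a)) / 2
    = (if c = \<sigma> b then g b * (- (weight (a, \<sigma> b, p) - weight (p, b, a) - weight (\<sigma> p, a, b)) / 4
        - weight (a, b, p) / 2) else 0)"
proof -
  have cycles: "C a c p * C b p a = 0" "C (\<sigma> p) c (\<sigma> a) * C (\<sigma> a) b (\<sigma> p) = 0" "C a b p * C p c a = 0"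
    using no_two_cycle[of c a p b] no_two_cycle[of c "\<sigma> p" "\<sigma> a" b] no_two_cycle[of b a p c]
      bracket_antisym[of a c p] bracket_antisym[of b p a] bracket_antisym[of "\<sigma> p" c "\<sigma> a"]
      bracket_antisym[of "\<sigma> a" b "\<sigma> p"] bracket_antisym[of a b p] bracket_antisym[of p c a]
    by simp_all
  show ?thesis
  proof (cases "c = \<sigma> b")
    case True
    have "\<sigma> c = b" "g c = g b" "g (\<sigma> b) = g b" "g (\<sigma> p) = g p" "\<sigma> (\<sigma> a) = a" "\<sigma> (\<sigma> p) = p"
      using True assms by (simp_all add: sigma_sigma metric_sigma)
    moreover have "g a \<noteq> 0" "g b \<noteq> 0" "g p \<noteq> 0"
      using assms metric_nonzero by simp_all
    ultimately have products:
      "C a c p * (C (\<sigma> a) b (\<sigma> p) * g p / g a) = g b * weight (a, \<sigma> b, p)"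
      "C (\<sigma> p) c (\<sigma> a) * g a / g p * C b p a = - (g b * weight (p, b, a))"
      "C (\<sigma> p) a (\<sigma> c) * g c / g p * (C (\<sigma> a) p (\<sigma> b) * g b / g a) = - (g b * weight (\<sigma> p, a, b))"
      "C a b p * (C (\<sigma> a) c (\<sigma> p) * g p / g a) = g b * weight (a, b, p)"
      using True bracket_antisym[of b p a] bracket_antisym[of "\<sigma> a" p "\<sigma> b"]
      by (simp_all add: weight_eq field_simps)
    have "C (\<sigma> p) c (\<sigma> a) * g a / g p * (C (\<sigma> a) b (\<sigma> p) * g p / g a) = 0"
      using cycles(2) by auto
    then show ?thesis
      unfolding products cycles(1,3) by (simp only: True) (simp add: algebra_simps)
  next
    case False
    have vanishing:
      "C a c p * (C (\<sigma> a) b (\<sigma> p) * g p / g a) = 0"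
      "C (\<sigma> p) c (\<sigma> a) * g a / g p * C b p a = 0"
      "C (\<sigma> p) c (\<sigma> a) * g a / g p * (C (\<sigma> a) b (\<sigma> p) * g p / g a) = 0"
      "C (\<sigma> p) a (\<sigma> c) * g c / g p * (C (\<sigma> a) p (\<sigma> b) * g b / g a) = 0"
      "C a b p * (C (\<sigma> a) c (\<sigma> p) * g p / g a) = 0"
      using products_vanish_unless_sigma_pair[OF assms False] cycles(2) by auto
    show ?thesis
      unfolding cycles(1,3) vanishing using False by simp
  qed
qed

lemma sum_surviving_weights:
  assumes "b < n"
  shows "(\<Sum>a<n. \<Sum>p<n. - (weight (a, \<sigma> b, p) - weight (p, b, a) - weight (\<sigma> p, a, b)) / 4
      - weight (a, b, p) / 2) = ricci_eigenvalue b"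
proof -
  have "(\<Sum>a<n. \<Sum>p<n. weight (a, \<sigma> b, p)) = (\<Sum>j<n. \<Sum>k<n. weight (b, j, k))"
  proof -
    have "(\<Sum>a<n. \<Sum>p<n. weight (a, \<sigma> b, p)) = (\<Sum>a<n. \<Sum>p<n. weight (\<sigma> b, \<sigma> a, \<sigma> p))"
      using sum_sigma_reindex[of "\<lambda>a. \<Sum>p<n. weight (\<sigma> b, a, \<sigma> p)"]
        sum_sigma_reindex[of "\<lambda>p. weight (\<sigma> b, a, p)" for a] weight_swap by simp
    also have "\<dots> = (\<Sum>j<n. \<Sum>k<n. weight (b, j, k))"
      using assms by (intro sum.cong refl) (simp add: weight_sigma)
    finally show ?thesis .
  qed
  moreover have "(\<Sum>a<n. \<Sum>p<n. weight (p, b, a)) = (\<Sum>j<n. \<Sum>k<n. weight (b, j, k))"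
    using weight_swap by (subst sum.swap) simp
  moreover have "(\<Sum>a<n. \<Sum>p<n. weight (\<sigma> p, a, b)) = (\<Sum>i<n. \<Sum>j<n. weight (i, j, b))"
    using sum_sigma_reindex[of "\<lambda>p. weight (p, a, b)" for a] by (subst sum.swap) simp
  moreover have "(\<Sum>a<n. \<Sum>p<n. weight (a, b, p)) = (\<Sum>j<n. \<Sum>k<n. weight (b, j, k))"
    using weight_swap by simp
  ultimately show ?thesis
    unfolding ricci_eigenvalue_def
    by (simp add: sum_subtractf sum_divide_distrib[symmetric] sum.distrib diff_divide_distrib)
qed

lemma ricci_tensor_eq:
  assumes "b < n" "c < n"
  shows "ricci_tensor n C gram b c = (if c = \<sigma> b then g b * ricci_eigenvalue b else 0)"
proof -
  have "- christoffel a c p * christoffel b p a - C a b p * christoffel p c a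
      = (if c = \<sigma> b then g b * (- (weight (a, \<sigma> b, p) - weight (p, b, a) - weight (\<sigma> p, a, b)) / 4
          - weight (a, b, p) / 2) else 0)
      - ((C a c p + C (\<sigma> p) c (\<sigma> a) * g a / g p) * (C (\<sigma> a) p (\<sigma> b) * g b / g a)) / 4
      - (C (\<sigma> p) a (\<sigma> c) * g c / g p * (C b p a + C (\<sigma> a) b (\<sigma> p) * g p / g a)
        + 2 * (C a b p * (C (\<sigma> a) p (\<sigma> c) * g c / g a))) / 4" if "a < n" "p < n" for a p
    unfolding ricci_surviving_terms[OF that assms, symmetric]
      christoffel_eq[OF that(1) assms(2) that(2)] christoffel_eq[OF assms(1) that(2) that(1)]
      christoffel_eq[OF that(2) assms(2) that(1)]
    by (rule christoffel_product_regroup)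
  then have "ricci_tensor n C gram b c
      = (\<Sum>a<n. \<Sum>p<n. if c = \<sigma> b then g b * (- (weight (a, \<sigma> b, p) - weight (p, b, a)
          - weight (\<sigma> p, a, b)) / 4 - weight (a, b, p) / 2) else 0)
      - (\<Sum>a<n. \<Sum>p<n. (C a c p + C (\<sigma> p) c (\<sigma> a) * g a / g p) * (C (\<sigma> a) p (\<sigma> b) * g b / g a)) / 4
      - (\<Sum>a<n. \<Sum>p<n. C (\<sigma> p) a (\<sigma> c) * g c / g p * (C b p a + C (\<sigma> a) b (\<sigma> p) * g p / g a)
        + 2 * (C a b p * (C (\<sigma> a) p (\<sigma> c) * g c / g a))) / 4"
    unfolding ricci_tensor_eq_sum by (simp add: sum_subtractf sum_divide_distrib)
  also have "\<dots> = (if c = \<sigma> b then g b * ricci_eigenvalue b else 0)"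
    unfolding ricci_cancel_sigma_swap ricci_cancel_swap
    using sum_surviving_weights[OF assms(1)] by (simp add: sum_distrib_left[symmetric])
  finally show ?thesis .
qed

lemma ricci_operator_eq:
  "ricci_operator n C gram = (\<lambda>i j. if i < n \<and> j < n \<and> i = j then ricci_eigenvalue i else 0)"
  unfolding ricci_operator_def
proof (rule the_equality)
  have "(\<Sum>q<n. (if b < n \<and> q < n \<and> b = q then ricci_eigenvalue b else 0) * gram q c) = ricci_tensor n C gram b c"
    if "b < n" "c < n" for b c
  proof -
    have "(\<Sum>q<n. (if b < n \<and> q < n \<and> b = q then ricci_eigenvalue b else 0) * gram q c)
        = (if b < n \<and> \<sigma> c < n \<and> b = \<sigma> c then ricci_eigenvalue b else 0) * g (\<sigma> c)"
      by (rule sum_mult_gram[OF that(2)])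
    also have "\<dots> = ricci_tensor n C gram b c"
      unfolding ricci_tensor_eq[OF that] using that sigma_less sigma_sigma metric_sigma
      by (auto simp: mult.commute)
    finally show ?thesis .
  qed
  then show "(\<forall>i j. \<not> (i < n \<and> j < n) \<longrightarrow> (if i < n \<and> j < n \<and> i = j then ricci_eigenvalue i else 0) = 0) \<and>
    (\<forall>b<n. \<forall>c<n. (\<Sum>q<n. (if b < n \<and> q < n \<and> b = q then ricci_eigenvalue b else 0) * gram q c)
      = ricci_tensor n C gram b c)"
    by auto
next
  fix Q
  assume Q: "(\<forall>i j. \<not> (i < n \<and> j < n) \<longrightarrow> Q i j = 0) \<and>
    (\<forall>b<n. \<forall>c<n. (\<Sum>q<n. Q b q * gram q c) = ricci_tensor n C gram b c)"
  have "Q b q = (if b < n \<and> q < n \<and> b = q then ricci_eigenvalue b else 0)" for b q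
  proof (cases "b < n \<and> q < n")
    case True
    then have "(\<Sum>q'<n. Q b q' * gram q' (\<sigma> q)) = ricci_tensor n C gram b (\<sigma> q)"
      using Q sigma_less by blast
    then have "Q b q * g q = (if b = q then ricci_eigenvalue b * g q else 0)"
      using True sum_mult_gram[of "\<sigma> q" "Q b"] sigma_less sigma_sigma sigma_eq_iff
      by (auto simp: ricci_tensor_eq mult.commute)
    then show ?thesis
      using True metric_nonzero[of q] by (cases "b = q") auto
  next
    case False
    then show ?thesis
      using Q by auto
  qed
  then show "Q = (\<lambda>i j. if i < n \<and> j < n \<and> i = j then ricci_eigenvalue i else 0)"
    by (intro ext)
qed

lemma root_matrix_transpose_weight:
  assumes "l < n"
  shows "(\<Sum>t\<in>arrows n C. of_int (root_matrix t l) * weight t) = 2 * ricci_eigenvalue l"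
proof -
  have root_matrix_weight: "of_int (root_matrix (i, j, k) l) * weight (i, j, k)
      = (if k = l then weight (i, j, k) else 0) - (if i = l then weight (i, j, k) else 0)
        - (if j = l then weight (i, j, k) else 0)" for i j k
    by (auto simp: root_matrix_def)
  have "(\<Sum>t\<in>arrows n C. of_int (root_matrix t l) * weight t)
      = (\<Sum>i<n. \<Sum>j<n. \<Sum>k<n. of_int (root_matrix (i, j, k) l) * weight (i, j, k)) / 2"
    using weight_swap weight_eq_0 by (intro sum_arrows_eq_half_triple_sum) (auto simp: root_matrix_def)
  also have "\<dots> = ((\<Sum>i<n. \<Sum>j<n. \<Sum>k<n. if k = l then weight (i, j, k) else 0)
      - (\<Sum>i<n. \<Sum>j<n. \<Sum>k<n. if i = l then weight (i, j, k) else 0)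
      - (\<Sum>i<n. \<Sum>j<n. \<Sum>k<n. if j = l then weight (i, j, k) else 0)) / 2"
    unfolding root_matrix_weight by (simp add: sum_subtractf)
  also have "(\<Sum>i<n. \<Sum>j<n. \<Sum>k<n. if k = l then weight (i, j, k) else 0) = (\<Sum>i<n. \<Sum>j<n. weight (i, j, l))"
    using assms by simp
  also have "(\<Sum>i<n. \<Sum>j<n. \<Sum>k<n. if i = l then weight (i, j, k) else 0)
      = (\<Sum>i<n. if i = l then (\<Sum>j<n. \<Sum>k<n. weight (i, j, k)) else 0)"
    by (intro sum.cong) auto
  also have "\<dots> = (\<Sum>j<n. \<Sum>k<n. weight (l, j, k))"
    using assms by simp
  also have "(\<Sum>i<n. \<Sum>j<n. \<Sum>k<n. if j = l then weight (i, j, k) else 0)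
      = (\<Sum>i<n. \<Sum>j<n. if j = l then (\<Sum>k<n. weight (i, j, k)) else 0)"
    by (intro sum.cong) auto
  also have "\<dots> = (\<Sum>i<n. \<Sum>k<n. weight (l, i, k))"
    using assms weight_swap by simp
  finally show ?thesis
    unfolding ricci_eigenvalue_def by simp
qed

end

section \<open>Signs and logarithms\<close>

lemma logsign_cases: "logsign x = 0 \<or> logsign x = 1"
  unfolding logsign_def by simp

lemma logsign_mult: "x \<noteq> 0 \<Longrightarrow> y \<noteq> 0 \<Longrightarrow> logsign (x * y) = (logsign x + logsign y) mod 2"
  unfolding logsign_def by (auto simp: mult_less_0_iff)

lemma logsign_divide: "x \<noteq> 0 \<Longrightarrow> y \<noteq> 0 \<Longrightarrow> logsign (x / y) = (logsign x + logsign y) mod 2"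
  unfolding logsign_def by (auto simp: divide_less_0_iff)

lemma real_eq_iff_abs_logsign: "x = y \<longleftrightarrow> \<bar>x\<bar> = \<bar>y\<bar> \<and> logsign x = logsign y"
  unfolding logsign_def by (auto simp: abs_if split: if_splits)

lemma logsign_add_mod_2_cancel:
  assumes "(logsign x + c) mod 2 = (logsign y + c) mod 2"
  shows "logsign x = logsign y"
proof -
  have "\<forall>a b. (a = 0 \<or> a = 1) \<longrightarrow> (b = 0 \<or> b = 1) \<longrightarrow> (a + c) mod 2 = (b + c) mod 2 \<longrightarrow> a = (b::int)"
    by presburger
  then show ?thesis
    using assms logsign_cases[of x] logsign_cases[of y] by blast
qed

text \<open>The parity bookkeeping behind logsign_weight, in the shape produced by logsign_mult and
  logsign_divide.\<close>

lemma mod_2_sign_sum: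
  fixes x y i j k :: int
  shows "((((x + y) mod 2 + k) mod 2 + (i + j) mod 2) mod 2 + x + y) mod 2 = (k - i - j) mod 2"
proof -
  have "((((x + y) mod 2 + k) mod 2 + (i + j) mod 2) mod 2 + x + y) mod 2
      = ((((x + y) + k) + (i + j)) mod 2 + (x + y)) mod 2"
    by (simp only: mod_add_left_eq mod_add_right_eq add.assoc)
  also have "\<dots> = ((k - i - j) + (x + y + i + j) * 2) mod 2"
    by (simp only: mod_add_left_eq) (simp add: algebra_simps)
  also have "\<dots> = (k - i - j) mod 2"
    by (rule mod_mult_self1)
  finally show ?thesis .
qed

lemma abs_pow_eq_exp:
  assumes "finite A" and "\<forall>t\<in>A. X t \<noteq> 0"
  shows "abs_pow A X a = exp (\<Sum>t\<in>A. a t * ln \<bar>X t\<bar>)"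
  unfolding abs_pow_def using assms by (simp add: exp_sum powr_def mult.commute)

lemma abs_pow_double_eq_iff:
  assumes "finite A" and "\<forall>t\<in>A. X t \<noteq> 0" and "\<forall>t\<in>A. Y t \<noteq> 0"
  shows "abs_pow A X a = abs_pow A Y (\<lambda>t. 2 * a t)
    \<longleftrightarrow> (\<Sum>t\<in>A. a t * ln \<bar>X t\<bar>) = (\<Sum>t\<in>A. 2 * a t * ln \<bar>Y t\<bar>)"
  using assms by (simp add: abs_pow_eq_exp)

context sigma_diagonal_metric
begin

lemma weight_sigma_act:
  assumes "t \<in> arrows n C"
  shows "weight (sigma_act \<sigma> t) = weight t"
proof -
  obtain i j k where t: "t = (i, j, k)" and ijk: "i < j" "j < n" "k < n"
    using assms unfolding arrows_def by auto
  have "weight (sigma_act \<sigma> t) = weight (\<sigma> i, \<sigma> j, \<sigma> k)"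
    using t weight_swap[of "\<sigma> i" "\<sigma> j" "\<sigma> k"] by (cases "\<sigma> i < \<sigma> j") (auto simp: sigma_act_eq min_def max_def)
  then show ?thesis
    using t ijk weight_sigma by simp
qed

lemma weight_nonzero:
  assumes "t \<in> arrows n C"
  shows "weight t \<noteq> 0"
proof -
  obtain i j k where t: "t = (i, j, k)" and ijk: "i < j" "j < n" "k < n" "C i j k \<noteq> 0"
    using assms unfolding arrows_def by auto
  then show ?thesis
    using bracket_sigma_nonzero[OF ijk(4)] metric_nonzero by (simp add: weight_eq)
qed

lemma ln_abs_weight:
  assumes "t \<in> arrows n C"
  shows "ln \<bar>weight t\<bar> = ln \<bar>struct_const C t\<bar> + ln \<bar>struct_const C (sigma_act \<sigma> t)\<bar>
    + (\<Sum>l<n. of_int (root_matrix t l) * ln \<bar>g l\<bar>)"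
proof -
  obtain i j k where t: "t = (i, j, k)" and ijk: "i < j" "j < n" "k < n" "C i j k \<noteq> 0"
    using assms unfolding arrows_def by auto
  have "\<bar>weight t\<bar> = \<bar>C i j k\<bar> * \<bar>C (\<sigma> i) (\<sigma> j) (\<sigma> k)\<bar> * \<bar>g k\<bar> / (\<bar>g i\<bar> * \<bar>g j\<bar>)"
    using t by (simp add: weight_eq abs_mult abs_divide)
  then have "ln \<bar>weight t\<bar> = ln \<bar>C i j k\<bar> + ln \<bar>C (\<sigma> i) (\<sigma> j) (\<sigma> k)\<bar> + ln \<bar>g k\<bar> - ln \<bar>g i\<bar> - ln \<bar>g j\<bar>"
    using ijk bracket_sigma_nonzero[OF ijk(4)] metric_nonzero by (simp add: ln_mult ln_div)
  then show ?thesis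
    using t ijk abs_struct_const_sigma_act[of i j k] root_matrix_sum[of i n j k "\<lambda>l. ln \<bar>g l\<bar>"]
    by (simp add: struct_const_eq)
qed

lemma logsign_weight:
  assumes "t \<in> arrows n C"
  shows "(logsign (weight t) + logsign (struct_const C t) + logsign (c_tilde \<sigma> C t)) mod 2
    = root_matrix2_mult n (\<lambda>l. logsign (g l)) t"
proof -
  obtain i j k where t: "t = (i, j, k)" and ijk: "i < j" "j < n" "k < n" "C i j k \<noteq> 0"
    using assms unfolding arrows_def by auto
  define x where "x = struct_const C t"
  define y where "y = c_tilde \<sigma> C t"
  have "x \<noteq> 0" "y \<noteq> 0"
    using t ijk(4) bracket_sigma_nonzero[OF ijk(4)] by (auto simp: x_def y_def struct_const_eq c_tilde_eq)
  moreover have "weight t = x * y * g k / (g i * g j)"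
    using t by (simp add: x_def y_def struct_const_eq c_tilde_eq weight_eq)
  ultimately have weight: "logsign (weight t) = (((logsign x + logsign y) mod 2 + logsign (g k)) mod 2
      + (logsign (g i) + logsign (g j)) mod 2) mod 2"
    using ijk metric_nonzero by (simp add: logsign_divide logsign_mult)
  have root: "root_matrix2_mult n (\<lambda>l. logsign (g l)) t = (logsign (g k) - logsign (g i) - logsign (g j)) mod 2"
    unfolding root_matrix2_mult_def using t ijk root_matrix_sum[of i n j k "\<lambda>l. logsign (g l)"] by simp
  show ?thesis
    unfolding x_def[symmetric] y_def[symmetric] weight root add.assoc[symmetric] by (rule mod_2_sign_sum)
qed

lemma sum_ln_abs_weight:
  assumes "a \<in> inv_kernel n C \<sigma>"
  shows "(\<Sum>t\<in>arrows n C. a t * ln \<bar>weight t\<bar>) = (\<Sum>t\<in>arrows n C. 2 * a t * ln \<bar>struct_const C t\<bar>)"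
proof -
  have "(\<Sum>t\<in>arrows n C. a t * (\<Sum>l<n. of_int (root_matrix t l) * ln \<bar>g l\<bar>))
      = (\<Sum>l<n. ln \<bar>g l\<bar> * (\<Sum>t\<in>arrows n C. of_int (root_matrix t l) * a t))"
    by (simp add: sum_distrib_left sum.swap[of _ "arrows n C"] mult_ac)
  also have "\<dots> = 0"
    using assms unfolding inv_kernel_def by simp
  finally have "(\<Sum>t\<in>arrows n C. a t * (\<Sum>l<n. of_int (root_matrix t l) * ln \<bar>g l\<bar>)) = 0" .
  moreover have "(\<Sum>t\<in>arrows n C. a t * ln \<bar>weight t\<bar>)
      = (\<Sum>t\<in>arrows n C. a t * ln \<bar>struct_const C t\<bar>) + (\<Sum>t\<in>arrows n C. a t * ln \<bar>struct_const C (sigma_act \<sigma> t)\<bar>)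
        + (\<Sum>t\<in>arrows n C. a t * (\<Sum>l<n. of_int (root_matrix t l) * ln \<bar>g l\<bar>))"
    by (simp add: ln_abs_weight distrib_left sum.distrib cong: sum.cong)
  moreover have "(\<Sum>t\<in>arrows n C. a t * ln \<bar>struct_const C (sigma_act \<sigma> t)\<bar>)
      = (\<Sum>t\<in>arrows n C. a t * ln \<bar>struct_const C t\<bar>)"
    using assms unfolding inv_kernel_def by (intro sum_ln_abs_struct_const_sigma_act) simp
  ultimately show ?thesis
    by (simp add: sum.distrib[symmetric] algebra_simps)
qed

lemma weight_eqI:
  assumes "t \<in> arrows n C" and "X t \<noteq> 0"
    and "ln \<bar>X t\<bar> = ln \<bar>struct_const C t\<bar> + ln \<bar>struct_const C (sigma_act \<sigma> t)\<bar>
      + (\<Sum>l<n. of_int (root_matrix t l) * ln \<bar>g l\<bar>)"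
    and "(logsign (X t) + logsign (struct_const C t) + logsign (c_tilde \<sigma> C t)) mod 2
      = root_matrix2_mult n (\<lambda>l. logsign (g l)) t"
  shows "weight t = X t"
proof -
  have "ln \<bar>weight t\<bar> = ln \<bar>X t\<bar>"
    using assms(1,3) ln_abs_weight by simp
  then have "\<bar>weight t\<bar> = \<bar>X t\<bar>"
    using weight_nonzero[OF assms(1)] assms(2) by simp
  moreover have "logsign (weight t) = logsign (X t)"
  proof -
    have "(logsign (weight t) + (logsign (struct_const C t) + logsign (c_tilde \<sigma> C t))) mod 2
        = (logsign (X t) + (logsign (struct_const C t) + logsign (c_tilde \<sigma> C t))) mod 2"
      using assms(1,4) logsign_weight by (simp add: add.assoc)
    then show ?thesis
      by (rule logsign_add_mod_2_cancel)
  qed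
  ultimately show ?thesis
    using real_eq_iff_abs_logsign by blast
qed

end

section \<open>\<sigma>-invariant solutions of M_\<Delta> y = v\<close>

context nice_nilpotent_involution
begin

lemma sum_ln_ratio_eq_0_if_abs_pow_eq:
  assumes "a \<in> inv_kernel n C \<sigma>" and "\<forall>t\<in>arrows n C. X t \<noteq> 0"
    and "abs_pow (arrows n C) X a = abs_pow (arrows n C) (struct_const C) (\<lambda>t. 2 * a t)"
  shows "(\<Sum>t\<in>arrows n C. a t * (ln \<bar>X t\<bar> - ln \<bar>struct_const C t\<bar> - ln \<bar>struct_const C (sigma_act \<sigma> t)\<bar>)) = 0"
proof -
  have "(\<Sum>t\<in>arrows n C. a t * ln \<bar>X t\<bar>) = (\<Sum>t\<in>arrows n C. 2 * a t * ln \<bar>struct_const C t\<bar>)"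
    using assms(2,3) finite_arrows struct_const_nonzero by (simp add: abs_pow_double_eq_iff)
  moreover have "(\<Sum>t\<in>arrows n C. a t * ln \<bar>struct_const C (sigma_act \<sigma> t)\<bar>)
      = (\<Sum>t\<in>arrows n C. a t * ln \<bar>struct_const C t\<bar>)"
    using assms(1) unfolding inv_kernel_def by (intro sum_ln_abs_struct_const_sigma_act) simp
  ultimately show ?thesis
    by (simp add: right_diff_distrib sum_subtractf sum_distrib_left[symmetric] mult.assoc)
qed

text \<open>Averaging over the involution reduces orthogonality to the whole left kernel of M_\<Delta> to
  orthogonality to its \<sigma>-invariant part.\<close>

lemma orthogonal_left_kernel_if_orthogonal_basis:
  assumes basis: "is_basis_of r \<alpha> (inv_kernel n C \<sigma>)"
    and v_inv: "\<forall>t\<in>arrows n C. v (sigma_act \<sigma> t) = v t"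
    and orth: "\<forall>i<r. (\<Sum>t\<in>arrows n C. \<alpha> i t * v t) = 0"
    and a: "in_left_kernel (arrows n C) {..<n} (\<lambda>t l. of_int (root_matrix t l)) a"
  shows "(\<Sum>t\<in>arrows n C. a t * v t) = 0"
proof -
  define a' where "a' t = (if t \<in> arrows n C then (a t + a (sigma_act \<sigma> t)) / 2 else 0)" for t
  have a_sigma: "(\<Sum>t\<in>arrows n C. of_int (root_matrix t l) * a (sigma_act \<sigma> t)) = 0" if "l < n" for l
  proof -
    have "(\<Sum>t\<in>arrows n C. of_int (root_matrix t l) * a (sigma_act \<sigma> t))
        = (\<Sum>t\<in>arrows n C. of_int (root_matrix (sigma_act \<sigma> (sigma_act \<sigma> t)) l) * a (sigma_act \<sigma> t))"
      by (intro sum.cong refl) (simp add: sigma_act_sigma_act)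
    also have "\<dots> = (\<Sum>t\<in>arrows n C. of_int (root_matrix t (\<sigma> l)) * a t)"
      using that by (simp add: sum_arrows_sigma_act[of "\<lambda>t. of_int (root_matrix (sigma_act \<sigma> t) l) * a t"]
          root_matrix_sigma_act cong: sum.cong)
    also have "\<dots> = 0"
      using a sigma_less[OF that] unfolding in_left_kernel_def by simp
    finally show ?thesis .
  qed
  have "a' \<in> inv_kernel n C \<sigma>"
    unfolding inv_kernel_def
  proof (intro CollectI conjI allI impI ballI)
    fix l assume "l < n"
    then show "(\<Sum>t\<in>arrows n C. of_int (root_matrix t l) * a' t) = 0"
      using a a_sigma unfolding in_left_kernel_def a'_def
      by (simp add: sum_divide_distrib[symmetric] distrib_left sum.distrib)
  qed (auto simp: a'_def sigma_act_arrow sigma_act_sigma_act)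
  then obtain w where w: "a' = (\<lambda>t. \<Sum>i<r. w i * \<alpha> i t)"
    using basis unfolding is_basis_of_def by blast
  have "(\<Sum>t\<in>arrows n C. a' t * v t) = (\<Sum>i<r. w i * (\<Sum>t\<in>arrows n C. \<alpha> i t * v t))"
    unfolding w by (simp add: sum_distrib_left sum_distrib_right sum.swap[of _ "arrows n C"] mult_ac)
  also have "\<dots> = 0"
    using orth by simp
  finally have "(\<Sum>t\<in>arrows n C. a' t * v t) = 0" .
  moreover have "(\<Sum>t\<in>arrows n C. a (sigma_act \<sigma> t) * v t) = (\<Sum>t\<in>arrows n C. a t * v t)"
    using v_inv sum_arrows_sigma_act[of "\<lambda>t. a t * v t"] by (simp cong: sum.cong)
  ultimately show ?thesis
    unfolding a'_def by (simp add: sum_divide_distrib[symmetric] distrib_right sum.distrib)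
qed

lemma invariant_root_matrix_preimage:
  fixes v :: "nat \<times> nat \<times> nat \<Rightarrow> real"
  assumes "\<forall>t\<in>arrows n C. v (sigma_act \<sigma> t) = v t"
    and "\<forall>t\<in>arrows n C. v t = (\<Sum>l<n. of_int (root_matrix t l) * y l)"
  shows "\<forall>t\<in>arrows n C. v t = (\<Sum>l<n. of_int (root_matrix t l) * ((y l + y (\<sigma> l)) / 2))"
proof
  fix t assume t: "t \<in> arrows n C"
  have "(\<Sum>l<n. of_int (root_matrix t l) * y (\<sigma> l)) = (\<Sum>l<n. of_int (root_matrix t (\<sigma> (\<sigma> l))) * y (\<sigma> l))"
    by (intro sum.cong refl) (simp add: sigma_sigma)
  also have "\<dots> = (\<Sum>l<n. of_int (root_matrix t (\<sigma> l)) * y l)"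
    by (rule sum_sigma_reindex)
  also have "\<dots> = (\<Sum>l<n. of_int (root_matrix (sigma_act \<sigma> t) l) * y l)"
    using t by (intro sum.cong refl) (simp add: root_matrix_sigma_act)
  also have "\<dots> = v t"
    using assms t sigma_act_arrow by simp
  moreover have "(\<Sum>l<n. of_int (root_matrix t l) * ((y l + y (\<sigma> l)) / 2))
      = ((\<Sum>l<n. of_int (root_matrix t l) * y l) + (\<Sum>l<n. of_int (root_matrix t l) * y (\<sigma> l))) / 2"
    by (simp add: distrib_left sum.distrib sum_divide_distrib[symmetric])
  ultimately show "v t = (\<Sum>l<n. of_int (root_matrix t l) * ((y l + y (\<sigma> l)) / 2))"
    using assms(2) t by simp
qed

lemma exists_invariant_root_matrix_preimage:
  assumes "is_basis_of r \<alpha> (inv_kernel n C \<sigma>)"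
    and "\<forall>t\<in>arrows n C. v (sigma_act \<sigma> t) = v t"
    and "\<forall>i<r. (\<Sum>t\<in>arrows n C. \<alpha> i t * v t) = 0"
  obtains y where "\<forall>l<n. y (\<sigma> l) = y l"
    and "\<forall>t\<in>arrows n C. v t = (\<Sum>l<n. of_int (root_matrix t l) * y l)"
proof -
  have "in_column_span (arrows n C) {..<n} (\<lambda>t l. of_int (root_matrix t l)) v"
    using orthogonal_left_kernel_if_orthogonal_basis[OF assms]
    by (intro in_column_span_if_orthogonal_left_kernel) (simp_all add: finite_arrows)
  then obtain y where y: "\<forall>t\<in>arrows n C. v t = (\<Sum>l<n. of_int (root_matrix t l) * y l)"
    unfolding in_column_span_def by blast
  define y' where "y' l = (y l + y (\<sigma> l)) / 2" for l
  have "\<forall>l<n. y' (\<sigma> l) = y' l"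
    using sigma_sigma by (simp add: y'_def add.commute)
  moreover have "\<forall>t\<in>arrows n C. v t = (\<Sum>l<n. of_int (root_matrix t l) * y' l)"
    using invariant_root_matrix_preimage[OF assms(2) y] unfolding y'_def .
  ultimately show ?thesis
    using that by blast
qed

end

section \<open>Einstein \<sigma>-diagonal metrics versus solutions of (K), (H), (L_\<sigma>), (P_\<sigma>)\<close>

context nice_nilpotent_involution
begin

lemma solution_of_einstein_metric:
  assumes g: "sigma_diagonal n \<sigma> g" and sign: "\<forall>i<n. logsign (g i) = \<delta> i"
    and einstein: "\<forall>i<n. \<forall>j<n. ricci_operator n C (sdiag_metric \<sigma> g) i j = (if i = j then k / 2 else 0)"
    and basis: "\<forall>i<r. \<alpha> i \<in> inv_kernel n C \<sigma>"
  shows "\<exists>X :: nat \<times> nat \<times> nat \<Rightarrow> real.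
    (\<forall>t\<in>arrows n C. X (sigma_act \<sigma> t) = X t) \<and>
    (\<forall>l<n. (\<Sum>t\<in>arrows n C. of_int (root_matrix t l) * X t) = k) \<and>
    (\<forall>t\<in>arrows n C. X t \<noteq> 0) \<and>
    (\<forall>t\<in>arrows n C. (logsign (X t) + logsign (struct_const C t) + logsign (c_tilde \<sigma> C t)) mod 2
       = root_matrix2_mult n \<delta> t) \<and>
    (\<forall>i<r. abs_pow (arrows n C) X (\<alpha> i) = abs_pow (arrows n C) (struct_const C) (\<lambda>t. 2 * \<alpha> i t))"
proof -
  interpret sigma_diagonal_metric n C \<sigma> g
    using g by unfold_locales
  have "(\<Sum>t\<in>arrows n C. of_int (root_matrix t l) * weight t) = k" if "l < n" for l
    using einstein[rule_format, OF that that] that by (simp add: root_matrix_transpose_weight ricci_operator_eq)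
  moreover have "root_matrix2_mult n (\<lambda>l. logsign (g l)) = root_matrix2_mult n \<delta>"
    using sign by (rule root_matrix2_mult_cong)
  moreover have "abs_pow (arrows n C) weight (\<alpha> i) = abs_pow (arrows n C) (struct_const C) (\<lambda>t. 2 * \<alpha> i t)"
    if "i < r" for i
    using basis that sum_ln_abs_weight finite_arrows weight_nonzero struct_const_nonzero
    by (simp add: abs_pow_double_eq_iff)
  ultimately show ?thesis
    using weight_sigma_act weight_nonzero logsign_weight by (intro exI[of _ weight]) auto
qed

lemma einstein_metric_of_solution:
  assumes \<delta>: "\<forall>i<n. \<delta> i \<in> {0, 1}" "\<forall>i<n. \<delta> (\<sigma> i) = \<delta> i"
    and basis: "is_basis_of r \<alpha> (inv_kernel n C \<sigma>)"
    and X_inv: "\<forall>t\<in>arrows n C. X (sigma_act \<sigma> t) = X t"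
    and X_K: "\<forall>l<n. (\<Sum>t\<in>arrows n C. of_int (root_matrix t l) * X t) = k"
    and X_H: "\<forall>t\<in>arrows n C. X t \<noteq> 0"
    and X_L: "\<forall>t\<in>arrows n C. (logsign (X t) + logsign (struct_const C t) + logsign (c_tilde \<sigma> C t)) mod 2
       = root_matrix2_mult n \<delta> t"
    and X_P: "\<forall>i<r. abs_pow (arrows n C) X (\<alpha> i) = abs_pow (arrows n C) (struct_const C) (\<lambda>t. 2 * \<alpha> i t)"
  shows "\<exists>g. sigma_diagonal n \<sigma> g \<and> (\<forall>i<n. logsign (g i) = \<delta> i) \<and>
    (\<forall>i<n. \<forall>j<n. ricci_operator n C (sdiag_metric \<sigma> g) i j = (if i = j then k / 2 else 0))"
proof -
  define v where "v t = ln \<bar>X t\<bar> - ln \<bar>struct_const C t\<bar> - ln \<bar>struct_const C (sigma_act \<sigma> t)\<bar>" for t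
  have "\<forall>t\<in>arrows n C. v (sigma_act \<sigma> t) = v t"
    using X_inv sigma_act_sigma_act by (simp add: v_def)
  moreover have "\<forall>i<r. (\<Sum>t\<in>arrows n C. \<alpha> i t * v t) = 0"
    using basis X_H X_P unfolding v_def is_basis_of_def by (blast intro: sum_ln_ratio_eq_0_if_abs_pow_eq)
  ultimately obtain y where y_inv: "\<forall>l<n. y (\<sigma> l) = y l"
    and y: "\<forall>t\<in>arrows n C. v t = (\<Sum>l<n. of_int (root_matrix t l) * y l)"
    using exists_invariant_root_matrix_preimage[OF basis] by blast
  define g where "g l = (if \<delta> l = 1 then -1 else 1) * exp (y l)" for l
  have "sigma_diagonal n \<sigma> g"
    using y_inv \<delta>(2) by (simp add: sigma_diagonal_def g_def)
  moreover have sign: "\<forall>i<n. logsign (g i) = \<delta> i"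
    using \<delta>(1) by (auto simp: g_def logsign_def)
  ultimately interpret sigma_diagonal_metric n C \<sigma> g
    by unfold_locales
  have "root_matrix2_mult n (\<lambda>l. logsign (g l)) = root_matrix2_mult n \<delta>"
    using sign by (rule root_matrix2_mult_cong)
  moreover have "ln \<bar>g l\<bar> = y l" for l
    by (simp add: g_def abs_mult)
  ultimately have "weight t = X t" if "t \<in> arrows n C" for t
    using that X_H X_L y by (intro weight_eqI) (auto simp: v_def)
  then have "ricci_eigenvalue l = k / 2" if "l < n" for l
    using X_K that root_matrix_transpose_weight[OF that] by simp
  then show ?thesis
    using \<open>sigma_diagonal n \<sigma> g\<close> sign by (intro exI[of _ g]) (simp add: ricci_operator_eq)
qed

end

theorem theorem2p6:
  fixes n :: nat and C :: "nat \<Rightarrow> nat \<Rightarrow> nat \<Rightarrow> real" and \<sigma> :: "nat \<Rightarrow> nat"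
    and k :: real and \<delta> :: "nat \<Rightarrow> int"
    and r :: nat and \<alpha> :: "nat \<Rightarrow> nat \<times> nat \<times> nat \<Rightarrow> real"
  assumes "nice_lie_algebra n C"
    and "nilpotent_lie n C"
    and "diagram_involution n C \<sigma>"
    and "\<forall>i<n. \<delta> i \<in> {0, 1}"
    and "\<forall>i<n. \<delta> (\<sigma> i) = \<delta> i"
    and "is_basis_of r \<alpha> (inv_kernel n C \<sigma>)"
  shows "(\<exists>g. sigma_diagonal n \<sigma> g \<and> (\<forall>i<n. logsign (g i) = \<delta> i) \<and>
            (\<forall>i<n. \<forall>j<n. ricci_operator n C (sdiag_metric \<sigma> g) i j
                           = (if i = j then k / 2 else 0)))
     \<longleftrightarrow>
         (\<exists>X :: nat \<times> nat \<times> nat \<Rightarrow> real.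
            (\<forall>t\<in>arrows n C. X (sigma_act \<sigma> t) = X t) \<and>
            (\<forall>l<n. (\<Sum>t\<in>arrows n C. of_int (root_matrix t l) * X t) = k) \<and>
            (\<forall>t\<in>arrows n C. X t \<noteq> 0) \<and>
            (\<forall>t\<in>arrows n C.
               (logsign (X t) + logsign (struct_const C t) + logsign (c_tilde \<sigma> C t)) mod 2
                 = root_matrix2_mult n \<delta> t) \<and>
            (\<forall>i<r. abs_pow (arrows n C) X (\<alpha> i)
                     = abs_pow (arrows n C) (struct_const C) (\<lambda>t. 2 * \<alpha> i t)))"
proof -
  interpret nice_nilpotent_involution n C \<sigma>
    using assms(1-3) by unfold_locales
  have "\<forall>i<r. \<alpha> i \<in> inv_kernel n C \<sigma>"
    using assms(6) unfolding is_basis_of_def by blast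
  note solution = solution_of_einstein_metric[OF _ _ _ this]
  show ?thesis
    by (intro iffI; elim exE conjE)
      (rule solution einstein_metric_of_solution[OF assms(4-6)]; assumption)+
qed

end
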